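(* Let $R$ be a commutative Noetherian ring, $I$ an ideal of $R$, and $M$ an $R$-module such that $\operatorname{Tor}^R_i(R/I,M)=0$ for all integers $i\geq 0$. Then $\operatorname{Hom}_R(R/I,M)=0$. *)

theory Defs
  imports "HOL-Algebra.Algebra" "HOL-Algebra.Module" "HOL-Algebra.QuotRing" "HOL-Algebra.Ring_Divisibility"
begin

text \<open>Finite vectors (elements of N^n) with entries in the carrier of an abelian group N,
  represented as functions nat => 'b that are zero outside the index range.\<close>
definition vecs :: "('b, 'm) ring_scheme \<Rightarrow> nat \<Rightarrow> (nat \<Rightarrow> 'b) set" where
  "vecs N n = {v. (\<forall>j<n. v j \<in> carrier N) \<and> (\<forall>j\<ge>n. v j = \<zero>\<^bsub>N\<^esub>)}"

definition mat_act :: "('b, 'm) ring_scheme \<Rightarrow> ('a \<Rightarrow> 'b \<Rightarrow> 'b) \<Rightarrow> (nat \<Rightarrow> nat \<Rightarrow> 'a)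
    \<Rightarrow> nat \<Rightarrow> nat \<Rightarrow> (nat \<Rightarrow> 'b) \<Rightarrow> (nat \<Rightarrow> 'b)" where
  "mat_act N act A p q v =
     (\<lambda>j. if j < p then finsum N (\<lambda>k. act (A j k) (v k)) {..<q} else \<zero>\<^bsub>N\<^esub>)"

text \<open>A resolution of R/I by finitely generated free R-modules
  ... -> R^(n 2) --d 2--> R^(n 1) --d 1--> R^(n 0) = R -> R/I -> 0,
  where d i is an (n (i-1)) x (n i) matrix over R.
  Exactness at R/I is automatic (quotient map), exactness at R means im(d 1) = I,
  exactness at R^(n i), i >= 1, means ker(d i) = im(d (i+1)).\<close>
definition finite_free_resolution ::
  "('a, 'c) ring_scheme \<Rightarrow> 'a set \<Rightarrow> (nat \<Rightarrow> nat) \<Rightarrow> (nat \<Rightarrow> nat \<Rightarrow> nat \<Rightarrow> 'a) \<Rightarrow> bool" where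
  "finite_free_resolution R I n d \<longleftrightarrow>
     n 0 = 1 \<and>
     (\<forall>i\<ge>1. \<forall>j<n (i - 1). \<forall>k<n i. d i j k \<in> carrier R) \<and>
     mat_act R (monoid.mult R) (d 1) 1 (n 1) ` vecs R (n 1) = {v \<in> vecs R 1. v 0 \<in> I} \<and>
     (\<forall>i\<ge>1. {x \<in> vecs R (n i). mat_act R (monoid.mult R) (d i) (n (i - 1)) (n i) x = (\<lambda>_. \<zero>\<^bsub>R\<^esub>)}
              = mat_act R (monoid.mult R) (d (Suc i)) (n i) (n (Suc i)) ` vecs R (n (Suc i)))"

text \<open>Tor_i^R(R/I, M) = 0, computed as the i-th homology of the complex F \<otimes>_R M, where
  F is the given finite free resolution of R/I; F_i \<otimes>_R M = M^(n i) and d i \<otimes> M acts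
  by the same matrix.  Tor_0 = M / im(d 1 \<otimes> M).\<close>
definition Tor_zero_wrt ::
  "('a, 'c) ring_scheme \<Rightarrow> ('a, 'b, 'd) module_scheme \<Rightarrow> (nat \<Rightarrow> nat)
     \<Rightarrow> (nat \<Rightarrow> nat \<Rightarrow> nat \<Rightarrow> 'a) \<Rightarrow> nat \<Rightarrow> bool" where
  "Tor_zero_wrt R M n d i \<longleftrightarrow>
     (if i = 0 then mat_act M (smult M) (d 1) 1 (n 1) ` vecs M (n 1) = vecs M 1
      else {x \<in> vecs M (n i). mat_act M (smult M) (d i) (n (i - 1)) (n i) x = (\<lambda>_. \<zero>\<^bsub>M\<^esub>)}
             = mat_act M (smult M) (d (Suc i)) (n i) (n (Suc i)) ` vecs M (n (Suc i)))"

text \<open>Tor_i^R(R/I, M) = 0 for all i >= 0.  Since Tor is independent of the chosen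
  resolution, this is the vanishing of homology for some finite free resolution of R/I.\<close>
definition Tor_all_vanish ::
  "('a, 'c) ring_scheme \<Rightarrow> 'a set \<Rightarrow> ('a, 'b, 'd) module_scheme \<Rightarrow> bool" where
  "Tor_all_vanish R I M \<longleftrightarrow>
     (\<exists>n d. finite_free_resolution R I n d \<and> (\<forall>i::nat. Tor_zero_wrt R M n d i))"

text \<open>Hom_R(R/I, M): R-linear maps from the R-module R/I (= R Quot I, with r . X = (I +> r) X)
  to M.\<close>
definition Hom_quot ::
  "('a, 'c) ring_scheme \<Rightarrow> 'a set \<Rightarrow> ('a, 'b, 'd) module_scheme \<Rightarrow> ('a set \<Rightarrow> 'b) set" where
  "Hom_quot R I M = {f. f \<in> carrier (R Quot I) \<rightarrow> carrier M \<and>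
      (\<forall>xa\<in>carrier (R Quot I). \<forall>ya\<in>carrier (R Quot I).
          f (xa \<oplus>\<^bsub>(R Quot I)\<^esub> ya) = f xa \<oplus>\<^bsub>M\<^esub> f ya) \<and>
      (\<forall>r\<in>carrier R. \<forall>xa\<in>carrier (R Quot I).
          f ((I +>\<^bsub>R\<^esub> r) \<otimes>\<^bsub>(R Quot I)\<^esub> xa) = r \<odot>\<^bsub>M\<^esub> f xa)}"

end

theory Submission
  imports Defs
begin

text \<open>A homomorphism \<open>R/I \<rightarrow> M\<close> is determined by the image \<open>m\<close> of \<open>1\<close>, which is annihilated by \<open>I\<close>.
  The entries \<open>x\<^sub>0, \<dots>, x\<^bsub>s-1\<^esub>\<close> of the first differential of the free resolution \<open>F\<close> of \<open>R/I\<close>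
  generate \<open>I\<close>, so \<open>m e\<^bsub>{0..s-1}\<^esub>\<close> is a cycle of the Koszul complex \<open>K(x) \<otimes> M\<close> in top degree, and it
  suffices to show that \<open>K(x) \<otimes> M\<close> is exact.  This follows from the double complex
  \<open>K(x) \<otimes> F \<otimes> M\<close>: its total complex is acyclic, since every column is a sum of copies of
  \<open>F \<otimes> M\<close>, which is exact because all \<open>Tor\<^sub>i(R/I, M)\<close> vanish; and multiplication by \<open>x\<^sub>j\<close> is
  null-homotopic on \<open>K(x) \<otimes> M\<close> (the homotopy is \<open>e\<^sub>j \<and> -\<close>), so Koszul homology is killed by \<open>I\<close>.
  Comparing both filtrations of the double complex, degree by degree, shows that every Koszul
  cycle is a boundary.\<close>

lemma (in abelian_group) a_inv_zero [simp]: "\<ominus> \<zero> = \<zero>"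
  by (rule minus_equality) simp_all

lemma (in abelian_group) finsum_negf:
  assumes "finite A" "f \<in> A \<rightarrow> carrier G"
  shows "\<ominus> (\<Oplus>i\<in>A. f i) = (\<Oplus>i\<in>A. \<ominus> f i)"
  using assms by (induct set: finite) (simp_all add: Pi_def minus_add finsum_closed)

lemma (in abelian_group) finsum_eq_single:
  assumes "finite A" "j \<in> A" "f \<in> A \<rightarrow> carrier G" "\<And>i. i \<in> A \<Longrightarrow> i \<noteq> j \<Longrightarrow> f i = \<zero>"
  shows "(\<Oplus>i\<in>A. f i) = f j"
proof -
  have "(\<Oplus>i\<in>A. f i) = (\<Oplus>i\<in>A. if j = i then f i else \<zero>)"
    using assms by (intro finsum_cong') auto
  also have "\<dots> = f j"
    using assms by (intro add.finprod_singleton) auto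
  finally show ?thesis .
qed

lemma (in abelian_group) finsum_swap:
  assumes "finite A" "finite B" "\<And>i j. i \<in> A \<Longrightarrow> j \<in> B \<Longrightarrow> f i j \<in> carrier G"
  shows "(\<Oplus>i\<in>A. \<Oplus>j\<in>B. f i j) = (\<Oplus>j\<in>B. \<Oplus>i\<in>A. f i j)"
  using assms
proof (induct set: finite)
  case (insert a A)
  have "(\<Oplus>j\<in>B. \<Oplus>i\<in>insert a A. f i j) = (\<Oplus>j\<in>B. f a j \<oplus> (\<Oplus>i\<in>A. f i j))"
    using insert by (intro finsum_cong') (auto simp: Pi_def)
  also have "\<dots> = (\<Oplus>j\<in>B. f a j) \<oplus> (\<Oplus>j\<in>B. \<Oplus>i\<in>A. f i j)"
    using insert by (intro finsum_addf) (auto simp: Pi_def intro!: finsum_closed)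
  finally show ?case
    using insert by (subst finsum_insert) (auto intro!: finsum_closed)
qed simp

lemma (in abelian_group) finsum_antisym_eq_zero:
  assumes "finite A" "\<And>i j. i \<in> A \<Longrightarrow> j \<in> A \<Longrightarrow> g i j \<in> carrier G"
    and "\<And>i. i \<in> A \<Longrightarrow> g i i = \<zero>"
    and "\<And>i j. i \<in> A \<Longrightarrow> j \<in> A \<Longrightarrow> g i j = \<ominus> g j i"
  shows "(\<Oplus>i\<in>A. \<Oplus>j\<in>A. g i j) = \<zero>"
  using assms
proof (induct set: finite)
  case empty show ?case by simp
next
  case (insert a A)
  have c: "\<And>i j. i \<in> insert a A \<Longrightarrow> j \<in> insert a A \<Longrightarrow> g i j \<in> carrier G" using insert(4) by blast
  have IH: "(\<Oplus>i\<in>A. \<Oplus>j\<in>A. g i j) = \<zero>"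
    using insert(3)[OF c insert(5) insert(6)] by blast
  have cA: "\<And>i. i \<in> insert a A \<Longrightarrow> (\<lambda>j. g i j) \<in> A \<rightarrow> carrier G" using c by blast
  have s1: "\<And>i. i \<in> insert a A \<Longrightarrow> (\<Oplus>j\<in>insert a A. g i j) = g i a \<oplus> (\<Oplus>j\<in>A. g i j)"
    using insert(1,2) c cA by (subst finsum_insert) auto
  have "(\<Oplus>i\<in>insert a A. \<Oplus>j\<in>insert a A. g i j)
     = (\<Oplus>i\<in>insert a A. g i a \<oplus> (\<Oplus>j\<in>A. g i j))"
    by (rule finsum_cong') (use s1 cA c in \<open>auto intro!: finsum_closed\<close>)
  also have "\<dots> = (\<Oplus>i\<in>insert a A. g i a) \<oplus> (\<Oplus>i\<in>insert a A. \<Oplus>j\<in>A. g i j)"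
    by (rule finsum_addf) (use cA c in \<open>auto intro!: finsum_closed\<close>)
  also have "(\<Oplus>i\<in>insert a A. g i a) = g a a \<oplus> (\<Oplus>i\<in>A. g i a)"
    by (rule finsum_insert) (use insert(1,2) c in auto)
  also have "(\<Oplus>i\<in>insert a A. \<Oplus>j\<in>A. g i j)
      = (\<Oplus>j\<in>A. g a j) \<oplus> (\<Oplus>i\<in>A. \<Oplus>j\<in>A. g i j)"
    by (rule finsum_insert) (use insert(1,2) cA in \<open>auto intro!: finsum_closed\<close>)
  also note IH
  also have "(\<Oplus>j\<in>A. g a j) = \<ominus> (\<Oplus>i\<in>A. g i a)"
  proof -
    have "(\<Oplus>j\<in>A. g a j) = (\<Oplus>j\<in>A. \<ominus> g j a)"
    proof (rule finsum_cong'[OF refl])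
      show "(\<lambda>j. \<ominus> g j a) \<in> A \<rightarrow> carrier G" using c by blast
      fix j assume "j \<in> A"
      then show "g a j = \<ominus> g j a" by (intro insert(6)) auto
    qed
    also have "\<dots> = \<ominus> (\<Oplus>i\<in>A. g i a)"
      by (rule finsum_negf[symmetric]) (use insert(1) c in auto)
    finally show ?thesis .
  qed
  finally have e: "(\<Oplus>i\<in>insert a A. \<Oplus>j\<in>insert a A. g i j)
     = (g a a \<oplus> (\<Oplus>i\<in>A. g i a)) \<oplus> (\<ominus> (\<Oplus>i\<in>A. g i a) \<oplus> \<zero>)" .
  have z: "(\<Oplus>i\<in>A. g i a) \<in> carrier G" using c by (intro finsum_closed) auto
  show ?case unfolding e insert(5)[OF insertI1] using z by (simp add: r_neg)
qed

lemma (in module) smult_left_commute: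
  "a \<in> carrier R \<Longrightarrow> b \<in> carrier R \<Longrightarrow> m \<in> carrier M \<Longrightarrow>
    a \<odot>\<^bsub>M\<^esub> (b \<odot>\<^bsub>M\<^esub> m) = b \<odot>\<^bsub>M\<^esub> (a \<odot>\<^bsub>M\<^esub> m)"
  by (simp add: smult_assoc1[symmetric] m_comm)

lemma (in module) finsum_smult_rdistr:
  assumes "finite A" "f \<in> A \<rightarrow> carrier R" "m \<in> carrier M"
  shows "(\<Oplus>i\<in>A. f i) \<odot>\<^bsub>M\<^esub> m = (\<Oplus>\<^bsub>M\<^esub> i\<in>A. f i \<odot>\<^bsub>M\<^esub> m)"
  using assms by (induct set: finite) (simp_all add: Pi_def smult_l_distr R.finsum_closed)

definition signed :: "('b, 'm) ring_scheme \<Rightarrow> bool \<Rightarrow> 'b \<Rightarrow> 'b" where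
  "signed G b a = (if b then a else \<ominus>\<^bsub>G\<^esub> a)"

context abelian_group
begin

lemma signed_closed [simp]: "a \<in> carrier G \<Longrightarrow> signed G b a \<in> carrier G"
  by (simp add: signed_def)

lemma signed_True [simp]: "signed G True a = a"
  by (simp add: signed_def)

lemma signed_zero [simp]: "signed G b \<zero> = \<zero>"
  by (simp add: signed_def)

lemma signed_signed: "a \<in> carrier G \<Longrightarrow> signed G b (signed G b' a) = signed G (b = b') a"
  by (simp add: signed_def)

lemma signed_not: "a \<in> carrier G \<Longrightarrow> signed G (\<not> b) a = \<ominus> signed G b a"
  by (simp add: signed_def)

lemma signed_add:
  "a \<in> carrier G \<Longrightarrow> a' \<in> carrier G \<Longrightarrow> signed G b (a \<oplus> a') = signed G b a \<oplus> signed G b a'"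
  by (simp add: signed_def minus_add)

lemma signed_minus: "a \<in> carrier G \<Longrightarrow> signed G b (\<ominus> a) = \<ominus> signed G b a"
  by (simp add: signed_def)

lemma signed_cancel: "a \<in> carrier G \<Longrightarrow> signed G b a \<oplus> signed G (\<not> b) a = \<zero>"
  by (simp add: signed_def r_neg l_neg)

lemma signed_eq_zero_iff: "a \<in> carrier G \<Longrightarrow> signed G b a = \<zero> \<longleftrightarrow> a = \<zero>"
  by (metis minus_minus signed_def signed_zero)

lemma finsum_signed:
  "finite A \<Longrightarrow> f \<in> A \<rightarrow> carrier G \<Longrightarrow> signed G b (\<Oplus>i\<in>A. f i) = (\<Oplus>i\<in>A. signed G b (f i))"
  by (simp add: signed_def finsum_negf)

end

lemma (in module) smult_signed:
  "a \<in> carrier R \<Longrightarrow> m \<in> carrier M \<Longrightarrow> a \<odot>\<^bsub>M\<^esub> signed M b m = signed M b (a \<odot>\<^bsub>M\<^esub> m)"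
  by (simp add: signed_def smult_r_minus)

section \<open>The Koszul complex\<close>

definition koszul_sign :: "nat \<Rightarrow> nat set \<Rightarrow> bool" where
  "koszul_sign j T \<longleftrightarrow> even (card {i \<in> T. i < j})"

text \<open>A chain of the Koszul complex \<open>K(x\<^sub>0, \<dots>, x\<^bsub>s-1\<^esub>) \<otimes> M\<close> is a family \<open>c\<close> of elements of \<open>M\<close>
  indexed by subsets of \<open>{..<s}\<close>, \<open>c S\<close> being the coefficient of \<open>e\<^sub>S\<close>.  The differential is written
  coefficientwise: the coefficient of \<open>e\<^sub>T\<close> in \<open>\<partial>c\<close> collects the terms \<open>\<plusminus>x\<^sub>j c (T \<union> {j})\<close>, where
  \<open>koszul_sign j T\<close> is the sign of \<open>e\<^sub>j \<and> e\<^sub>T\<close>.\<close>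

definition koszul_diff ::
    "('a, 'b, 'd) module_scheme \<Rightarrow> nat \<Rightarrow> (nat \<Rightarrow> 'a) \<Rightarrow> (nat set \<Rightarrow> 'b) \<Rightarrow> nat set \<Rightarrow> 'b" where
  "koszul_diff M s x c T =
     (if T \<subseteq> {..<s}
      then \<Oplus>\<^bsub>M\<^esub> j\<in>{..<s} - T. signed M (koszul_sign j T) (x j \<odot>\<^bsub>M\<^esub> c (insert j T))
      else \<zero>\<^bsub>M\<^esub>)"

definition koszul_wedge :: "('a, 'b, 'd) module_scheme \<Rightarrow> nat \<Rightarrow> (nat set \<Rightarrow> 'b) \<Rightarrow> nat set \<Rightarrow> 'b" where
  "koszul_wedge M j c T =
     (if j \<in> T then signed M (koszul_sign j (T - {j})) (c (T - {j})) else \<zero>\<^bsub>M\<^esub>)"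

definition koszul_chains :: "('a, 'b, 'd) module_scheme \<Rightarrow> nat \<Rightarrow> nat \<Rightarrow> (nat set \<Rightarrow> 'b) set" where
  "koszul_chains M s q =
     {c. (\<forall>S. c S \<in> carrier M) \<and> (\<forall>S. c S \<noteq> \<zero>\<^bsub>M\<^esub> \<longrightarrow> S \<subseteq> {..<s} \<and> card S = q)}"

lemma koszul_sign_insert:
  assumes "finite T" "i \<notin> T"
  shows "koszul_sign j (insert i T) = (if i < j then \<not> koszul_sign j T else koszul_sign j T)"
proof -
  have "{k \<in> insert i T. k < j} = (if i < j then insert i {k \<in> T. k < j} else {k \<in> T. k < j})"
    by auto
  then show ?thesis
    using assms by (simp add: koszul_sign_def)
qed

lemma koszul_sign_swap:
  assumes "finite T" "i \<notin> T" "j \<notin> T" "i \<noteq> j"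
  shows "(koszul_sign j T = koszul_sign i (insert j T)) \<longleftrightarrow>
         \<not> (koszul_sign i T = koszul_sign j (insert i T))"
  using assms by (auto simp: koszul_sign_insert)

lemma koszul_chainsD:
  assumes "c \<in> koszul_chains M s q"
  shows koszul_chains_closed: "c S \<in> carrier M"
    and koszul_chains_support: "c S \<noteq> \<zero>\<^bsub>M\<^esub> \<Longrightarrow> S \<subseteq> {..<s} \<and> card S = q"
  using assms unfolding koszul_chains_def by blast+

locale koszul = module R M for R :: "('a, 'c) ring_scheme" and M :: "('a, 'b, 'd) module_scheme" +
  fixes s :: nat and x :: "nat \<Rightarrow> 'a"
  assumes x_closed: "\<And>j. j < s \<Longrightarrow> x j \<in> carrier R"
begin

abbreviation kdiff :: "(nat set \<Rightarrow> 'b) \<Rightarrow> nat set \<Rightarrow> 'b" where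
  "kdiff \<equiv> koszul_diff M s x"

lemma koszul_diff_closed: "(\<And>S. c S \<in> carrier M) \<Longrightarrow> kdiff c T \<in> carrier M"
  unfolding koszul_diff_def by (auto intro!: M.finsum_closed simp: x_closed)

lemma koszul_diff_cong:
  "(\<And>S. S \<subseteq> {..<s} \<Longrightarrow> c S = c' S) \<Longrightarrow> (\<And>S. c' S \<in> carrier M) \<Longrightarrow> kdiff c T = kdiff c' T"
  unfolding koszul_diff_def by (auto intro!: M.finsum_cong' simp: x_closed)

lemma koszul_diff_eq_zeroI:
  assumes "\<And>j. j < s \<Longrightarrow> j \<notin> T \<Longrightarrow> c (insert j T) = \<zero>\<^bsub>M\<^esub>"
  shows "kdiff c T = \<zero>\<^bsub>M\<^esub>"
proof -
  have "(\<Oplus>\<^bsub>M\<^esub> j\<in>{..<s} - T. signed M (koszul_sign j T) (x j \<odot>\<^bsub>M\<^esub> c (insert j T)))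
      = (\<Oplus>\<^bsub>M\<^esub> j\<in>{..<s} - T. \<zero>\<^bsub>M\<^esub>)"
    by (intro M.finsum_cong'[OF refl]) (auto simp: assms x_closed)
  then show ?thesis
    by (simp add: koszul_diff_def)
qed

lemma koszul_diff_zero: "kdiff (\<lambda>S. \<zero>\<^bsub>M\<^esub>) T = \<zero>\<^bsub>M\<^esub>"
  by (rule koszul_diff_eq_zeroI) simp

lemma koszul_diff_add:
  assumes "\<And>S. c S \<in> carrier M" "\<And>S. c' S \<in> carrier M"
  shows "kdiff (\<lambda>S. c S \<oplus>\<^bsub>M\<^esub> c' S) T = kdiff c T \<oplus>\<^bsub>M\<^esub> kdiff c' T"
proof (cases "T \<subseteq> {..<s}")
  case True
  have "kdiff (\<lambda>S. c S \<oplus>\<^bsub>M\<^esub> c' S) T = (\<Oplus>\<^bsub>M\<^esub> j\<in>{..<s} - T.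
      signed M (koszul_sign j T) (x j \<odot>\<^bsub>M\<^esub> c (insert j T)) \<oplus>\<^bsub>M\<^esub>
      signed M (koszul_sign j T) (x j \<odot>\<^bsub>M\<^esub> c' (insert j T)))"
    unfolding koszul_diff_def using True assms
    by (simp, intro M.finsum_cong'[OF refl]) (auto simp: smult_r_distr M.signed_add x_closed)
  also have "\<dots> = kdiff c T \<oplus>\<^bsub>M\<^esub> kdiff c' T"
    unfolding koszul_diff_def using True assms by (simp add: M.finsum_addf x_closed)
  finally show ?thesis .
qed (simp add: koszul_diff_def)

lemma koszul_diff_smult:
  assumes "\<And>S. c S \<in> carrier M" "a \<in> carrier R"
  shows "kdiff (\<lambda>S. a \<odot>\<^bsub>M\<^esub> c S) T = a \<odot>\<^bsub>M\<^esub> kdiff c T"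
proof (cases "T \<subseteq> {..<s}")
  case True
  have "kdiff (\<lambda>S. a \<odot>\<^bsub>M\<^esub> c S) T = (\<Oplus>\<^bsub>M\<^esub> j\<in>{..<s} - T.
      a \<odot>\<^bsub>M\<^esub> signed M (koszul_sign j T) (x j \<odot>\<^bsub>M\<^esub> c (insert j T)))"
    unfolding koszul_diff_def using True assms
    by (auto intro!: M.finsum_cong' simp: smult_signed smult_left_commute x_closed)
  also have "\<dots> = a \<odot>\<^bsub>M\<^esub> kdiff c T"
    unfolding koszul_diff_def using True assms by (simp add: finsum_smult_ldistr x_closed)
  finally show ?thesis .
qed (simp add: koszul_diff_def assms)

lemma koszul_diff_signed:
  assumes "\<And>S. c S \<in> carrier M"
  shows "kdiff (\<lambda>S. signed M b (c S)) T = signed M b (kdiff c T)"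
proof (cases "T \<subseteq> {..<s}")
  case True
  have "kdiff (\<lambda>S. signed M b (c S)) T = (\<Oplus>\<^bsub>M\<^esub> j\<in>{..<s} - T.
      signed M b (signed M (koszul_sign j T) (x j \<odot>\<^bsub>M\<^esub> c (insert j T))))"
    unfolding koszul_diff_def using True assms
    by (simp, intro M.finsum_cong'[OF refl]) (auto simp: smult_signed signed_def x_closed smult_r_minus)
  also have "\<dots> = signed M b (kdiff c T)"
    unfolding koszul_diff_def using True assms by (simp add: M.finsum_signed x_closed)
  finally show ?thesis .
qed (simp add: koszul_diff_def)

lemma koszul_diff_finsum:
  assumes "finite B" "\<And>k S. k \<in> B \<Longrightarrow> f k S \<in> carrier M"
  shows "kdiff (\<lambda>S. \<Oplus>\<^bsub>M\<^esub> k\<in>B. f k S) T = (\<Oplus>\<^bsub>M\<^esub> k\<in>B. kdiff (f k) T)"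
proof (cases "T \<subseteq> {..<s}")
  case True
  have "kdiff (\<lambda>S. \<Oplus>\<^bsub>M\<^esub> k\<in>B. f k S) T = (\<Oplus>\<^bsub>M\<^esub> j\<in>{..<s} - T.
      \<Oplus>\<^bsub>M\<^esub> k\<in>B. signed M (koszul_sign j T) (x j \<odot>\<^bsub>M\<^esub> f k (insert j T)))"
    unfolding koszul_diff_def using True assms
    by (auto intro!: M.finsum_cong' simp: M.finsum_signed finsum_smult_ldistr x_closed Pi_def)
  also have "\<dots> = (\<Oplus>\<^bsub>M\<^esub> k\<in>B. kdiff (f k) T)"
    unfolding koszul_diff_def using True assms by (subst M.finsum_swap) (auto simp: x_closed)
  finally show ?thesis .
qed (simp add: koszul_diff_def)

lemma koszul_diff_insert:
  assumes c: "\<And>S. c S \<in> carrier M" and T: "T \<subseteq> {..<s}" and j: "j \<in> {..<s} - T"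
  shows "kdiff c (insert j T) = (\<Oplus>\<^bsub>M\<^esub> i\<in>{..<s} - T. if i = j then \<zero>\<^bsub>M\<^esub>
           else signed M (koszul_sign i (insert j T)) (x i \<odot>\<^bsub>M\<^esub> c (insert i (insert j T))))"
    (is "_ = (\<Oplus>\<^bsub>M\<^esub> i\<in>_. ?g i)")
proof -
  have g: "?g \<in> {..<s} - T \<rightarrow> carrier M"
    using c x_closed by auto
  have "{..<s} - T = insert j ({..<s} - insert j T)"
    using j by blast
  then have "(\<Oplus>\<^bsub>M\<^esub> i\<in>{..<s} - T. ?g i) = (\<Oplus>\<^bsub>M\<^esub> i\<in>insert j ({..<s} - insert j T). ?g i)"
    by (simp only:)
  also have "\<dots> = ?g j \<oplus>\<^bsub>M\<^esub> (\<Oplus>\<^bsub>M\<^esub> i\<in>{..<s} - insert j T. ?g i)"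
    by (rule M.finsum_insert) (use g in auto)
  also have "(\<Oplus>\<^bsub>M\<^esub> i\<in>{..<s} - insert j T. ?g i) = kdiff c (insert j T)"
  proof -
    have "(\<Oplus>\<^bsub>M\<^esub> i\<in>{..<s} - insert j T. ?g i) = (\<Oplus>\<^bsub>M\<^esub> i\<in>{..<s} - insert j T.
        signed M (koszul_sign i (insert j T)) (x i \<odot>\<^bsub>M\<^esub> c (insert i (insert j T))))"
      by (rule M.finsum_cong'[OF refl]) (use c x_closed in auto)
    then show ?thesis
      using T j by (simp add: koszul_diff_def)
  qed
  finally show ?thesis
    using koszul_diff_closed[OF c] by simp
qed

lemma koszul_diff_squared:
  assumes c: "\<And>S. c S \<in> carrier M"
  shows "kdiff (kdiff c) T = \<zero>\<^bsub>M\<^esub>"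
proof (cases "T \<subseteq> {..<s}")
  case True
  define B where "B = {..<s} - T"
  have xB: "\<And>i. i \<in> B \<Longrightarrow> x i \<in> carrier R"
    by (auto simp: B_def x_closed)
  have fT: "finite T"
    using True finite_subset by blast
  define g where "g j i = (if i = j then \<zero>\<^bsub>M\<^esub>
      else signed M (koszul_sign j T = koszul_sign i (insert j T)) (x j \<odot>\<^bsub>M\<^esub> (x i \<odot>\<^bsub>M\<^esub> c (insert i (insert j T)))))"
    for j i
  have g_closed: "\<And>j i. j \<in> B \<Longrightarrow> i \<in> B \<Longrightarrow> g j i \<in> carrier M"
    by (simp add: g_def xB c)
  have "kdiff (kdiff c) T
      = (\<Oplus>\<^bsub>M\<^esub> j\<in>B. signed M (koszul_sign j T) (x j \<odot>\<^bsub>M\<^esub> kdiff c (insert j T)))"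
    using True by (simp add: koszul_diff_def B_def)
  also have "\<dots> = (\<Oplus>\<^bsub>M\<^esub> j\<in>B. \<Oplus>\<^bsub>M\<^esub> i\<in>B. g j i)"
  proof (rule M.finsum_cong'[OF refl])
    show "(\<lambda>j. \<Oplus>\<^bsub>M\<^esub> i\<in>B. g j i) \<in> B \<rightarrow> carrier M"
      using g_closed by (auto intro!: M.finsum_closed)
    fix j assume j: "j \<in> B"
    define G where "G i = (if i = j then \<zero>\<^bsub>M\<^esub>
      else signed M (koszul_sign i (insert j T)) (x i \<odot>\<^bsub>M\<^esub> c (insert i (insert j T))))" for i
    have G: "G \<in> B \<rightarrow> carrier M"
      using xB c by (simp add: G_def)
    have "kdiff c (insert j T) = (\<Oplus>\<^bsub>M\<^esub> i\<in>B. G i)"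
      using koszul_diff_insert[of c T j] c True j by (simp add: B_def G_def)
    then have "x j \<odot>\<^bsub>M\<^esub> kdiff c (insert j T) = (\<Oplus>\<^bsub>M\<^esub> i\<in>B. x j \<odot>\<^bsub>M\<^esub> G i)"
      using G j xB by (simp add: B_def finsum_smult_ldistr)
    also have "signed M (koszul_sign j T) \<dots> = (\<Oplus>\<^bsub>M\<^esub> i\<in>B. signed M (koszul_sign j T) (x j \<odot>\<^bsub>M\<^esub> G i))"
      using G j xB by (intro M.finsum_signed) (auto simp: B_def)
    also have "\<dots> = (\<Oplus>\<^bsub>M\<^esub> i\<in>B. g j i)"
      using G j xB c
      by (intro M.finsum_cong'[OF refl]) (auto simp: G_def g_def smult_signed M.signed_signed)
    finally show "signed M (koszul_sign j T) (x j \<odot>\<^bsub>M\<^esub> kdiff c (insert j T)) = (\<Oplus>\<^bsub>M\<^esub> i\<in>B. g j i)" .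
  qed
  also have "\<dots> = \<zero>\<^bsub>M\<^esub>"
  proof (rule M.finsum_antisym_eq_zero)
    fix i j assume i: "i \<in> B" and j: "j \<in> B"
    show "g i j = \<ominus>\<^bsub>M\<^esub> g j i"
    proof (cases "i = j")
      case False
      define \<beta> where "\<beta> \<longleftrightarrow> koszul_sign i T = koszul_sign j (insert i T)"
      define m where "m = x i \<odot>\<^bsub>M\<^esub> (x j \<odot>\<^bsub>M\<^esub> c (insert i (insert j T)))"
      have m: "m \<in> carrier M"
        using i j xB c by (simp add: m_def)
      have "g i j = signed M \<beta> m"
        unfolding g_def \<beta>_def m_def using False by (simp add: insert_commute[of j i])
      moreover have "koszul_sign j T = koszul_sign i (insert j T) \<longleftrightarrow> \<not> \<beta>"
        using koszul_sign_swap[OF fT _ _ False] i j by (auto simp: B_def \<beta>_def)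
      then have "g j i = signed M (\<not> \<beta>) m"
        unfolding g_def m_def using False i j xB c by (simp add: smult_left_commute[of "x j" "x i"])
      ultimately show ?thesis
        using m by (simp add: M.signed_not M.minus_minus)
    qed (simp add: g_def)
  qed (use g_closed in \<open>simp_all add: B_def g_def\<close>)
  finally show ?thesis .
qed (simp add: koszul_diff_def)

lemma koszul_wedge_chains:
  assumes c: "c \<in> koszul_chains M s q" and j: "j < s"
  shows "koszul_wedge M j c \<in> koszul_chains M s (Suc q)"
proof -
  have "T \<subseteq> {..<s} \<and> card T = Suc q" if nz: "koszul_wedge M j c T \<noteq> \<zero>\<^bsub>M\<^esub>" for T
  proof -
    have jT: "j \<in> T"
      using nz by (auto simp: koszul_wedge_def split: if_splits)
    then have "c (T - {j}) \<noteq> \<zero>\<^bsub>M\<^esub>"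
      using nz by (auto simp: koszul_wedge_def)
    then have T': "T - {j} \<subseteq> {..<s}" "card (T - {j}) = q"
      using koszul_chains_support[OF c] by auto
    then have "T \<subseteq> {..<s}"
      using jT j by auto
    moreover from this have "finite T"
      using finite_subset by blast
    ultimately show ?thesis
      using T' jT by (simp add: card_Diff_singleton) (metis Suc_pred card_gt_0_iff empty_iff)
  qed
  then show ?thesis
    using koszul_chains_closed[OF c] by (auto simp: koszul_chains_def koszul_wedge_def)
qed

lemma koszul_diff_wedge_notin:
  assumes c: "\<And>S. c S \<in> carrier M" and j: "j < s" and T: "T \<subseteq> {..<s}" "j \<notin> T"
  shows "kdiff (koszul_wedge M j c) T = x j \<odot>\<^bsub>M\<^esub> c T"
proof -
  have xj: "x j \<in> carrier R"
    using j x_closed by blast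
  have "kdiff (koszul_wedge M j c) T = (\<Oplus>\<^bsub>M\<^esub> i\<in>{..<s} - T.
      signed M (koszul_sign i T) (x i \<odot>\<^bsub>M\<^esub> koszul_wedge M j c (insert i T)))"
    using T by (simp add: koszul_diff_def)
  also have "\<dots> = signed M (koszul_sign j T) (x j \<odot>\<^bsub>M\<^esub> koszul_wedge M j c (insert j T))"
  proof (rule M.finsum_eq_single)
    show "(\<lambda>i. signed M (koszul_sign i T) (x i \<odot>\<^bsub>M\<^esub> koszul_wedge M j c (insert i T)))
        \<in> {..<s} - T \<rightarrow> carrier M"
      using x_closed c by (simp add: koszul_wedge_def)
    fix i assume "i \<in> {..<s} - T" "i \<noteq> j"
    then show "signed M (koszul_sign i T) (x i \<odot>\<^bsub>M\<^esub> koszul_wedge M j c (insert i T)) = \<zero>\<^bsub>M\<^esub>"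
      using T x_closed by (simp add: koszul_wedge_def)
  qed (use j T in simp_all)
  also have "\<dots> = x j \<odot>\<^bsub>M\<^esub> c T"
    using T xj c by (simp add: koszul_wedge_def smult_signed M.signed_signed)
  finally show ?thesis .
qed

lemma koszul_diff_wedge_in:
  assumes c: "\<And>S. c S \<in> carrier M" and cycle: "\<And>T. kdiff c T = \<zero>\<^bsub>M\<^esub>"
    and j: "j < s" and T: "T \<subseteq> {..<s}" "j \<in> T"
  shows "kdiff (koszul_wedge M j c) T = x j \<odot>\<^bsub>M\<^esub> c T"
proof -
  have xj: "x j \<in> carrier R"
    using j x_closed by blast
  define T0 where "T0 = T - {j}"
  have T0: "T = insert j T0" "j \<notin> T0" "finite T0" "T0 \<subseteq> {..<s}"
    using T finite_subset by (auto simp: T0_def)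
  define B where "B = {..<s} - T"
  have xB: "\<And>i. i \<in> B \<Longrightarrow> x i \<in> carrier R"
    by (auto simp: B_def x_closed)
  define y where "y i = x i \<odot>\<^bsub>M\<^esub> c (insert i T0)" for i
  have y: "\<And>i. i \<in> B \<Longrightarrow> y i \<in> carrier M"
    by (simp add: y_def xB c)
  have "kdiff (koszul_wedge M j c) T = (\<Oplus>\<^bsub>M\<^esub> i\<in>B.
      signed M (koszul_sign i T) (x i \<odot>\<^bsub>M\<^esub> koszul_wedge M j c (insert i T)))"
    using T by (simp add: koszul_diff_def B_def)
  also have "\<dots> = (\<Oplus>\<^bsub>M\<^esub> i\<in>B. \<ominus>\<^bsub>M\<^esub> signed M (koszul_sign j T0) (signed M (koszul_sign i T0) (y i)))"
  proof (rule M.finsum_cong'[OF refl])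
    show "(\<lambda>i. \<ominus>\<^bsub>M\<^esub> signed M (koszul_sign j T0) (signed M (koszul_sign i T0) (y i))) \<in> B \<rightarrow> carrier M"
      using y by simp
    fix i assume i: "i \<in> B"
    then have ij: "i \<noteq> j" "i \<notin> T0" "insert i T - {j} = insert i T0"
      using T0 by (auto simp: B_def)
    have sign: "koszul_sign i T = koszul_sign j (insert i T0) \<longleftrightarrow> \<not> (koszul_sign j T0 = koszul_sign i T0)"
      unfolding T0(1) using ij T0 by (auto simp: koszul_sign_insert)
    have "signed M (koszul_sign i T) (x i \<odot>\<^bsub>M\<^esub> koszul_wedge M j c (insert i T))
        = signed M (koszul_sign i T = koszul_sign j (insert i T0)) (y i)"
      using i ij T xB c by (simp add: koszul_wedge_def y_def smult_signed M.signed_signed)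
    also have "\<dots> = signed M (\<not> (koszul_sign j T0 = koszul_sign i T0)) (y i)"
      by (simp only: sign)
    also have "\<dots> = \<ominus>\<^bsub>M\<^esub> signed M (koszul_sign j T0) (signed M (koszul_sign i T0) (y i))"
      by (simp only: M.signed_not[OF y[OF i]] M.signed_signed[OF y[OF i]])
    finally show "signed M (koszul_sign i T) (x i \<odot>\<^bsub>M\<^esub> koszul_wedge M j c (insert i T))
        = \<ominus>\<^bsub>M\<^esub> signed M (koszul_sign j T0) (signed M (koszul_sign i T0) (y i))" .
  qed
  also have "\<dots> = \<ominus>\<^bsub>M\<^esub> signed M (koszul_sign j T0) (\<Oplus>\<^bsub>M\<^esub> i\<in>B. signed M (koszul_sign i T0) (y i))"
    using y by (simp add: B_def M.finsum_negf M.finsum_signed Pi_def M.finsum_closed)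
  also have "(\<Oplus>\<^bsub>M\<^esub> i\<in>B. signed M (koszul_sign i T0) (y i))
      = \<ominus>\<^bsub>M\<^esub> signed M (koszul_sign j T0) (x j \<odot>\<^bsub>M\<^esub> c T)"
  proof (rule M.minus_equality[symmetric])
    have "{..<s} - T0 = insert j B"
      using T j by (auto simp: B_def T0_def)
    then have "\<zero>\<^bsub>M\<^esub> = (\<Oplus>\<^bsub>M\<^esub> i\<in>insert j B. signed M (koszul_sign i T0) (x i \<odot>\<^bsub>M\<^esub> c (insert i T0)))"
      using cycle[of T0] T0(4) by (simp add: koszul_diff_def)
    also have "\<dots> = signed M (koszul_sign j T0) (x j \<odot>\<^bsub>M\<^esub> c T) \<oplus>\<^bsub>M\<^esub> (\<Oplus>\<^bsub>M\<^esub> i\<in>B. signed M (koszul_sign i T0) (y i))"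
      by (subst M.finsum_insert) (use T0 xj xB c in \<open>auto simp: B_def y_def\<close>)
    finally show "(\<Oplus>\<^bsub>M\<^esub> i\<in>B. signed M (koszul_sign i T0) (y i)) \<oplus>\<^bsub>M\<^esub> signed M (koszul_sign j T0) (x j \<odot>\<^bsub>M\<^esub> c T) = \<zero>\<^bsub>M\<^esub>"
      using xj c y by (simp add: M.a_comm M.finsum_closed Pi_def)
  qed (use xj c y in \<open>simp_all add: M.finsum_closed Pi_def\<close>)
  also have "\<ominus>\<^bsub>M\<^esub> signed M (koszul_sign j T0) (\<ominus>\<^bsub>M\<^esub> signed M (koszul_sign j T0) (x j \<odot>\<^bsub>M\<^esub> c T)) = x j \<odot>\<^bsub>M\<^esub> c T"
    using xj c by (simp add: M.signed_minus M.signed_signed M.minus_minus)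
  finally show ?thesis .
qed

text \<open>Each \<open>x\<^sub>j\<close> annihilates Koszul homology.\<close>

lemma koszul_diff_wedge:
  assumes "c \<in> koszul_chains M s q" "\<And>T. kdiff c T = \<zero>\<^bsub>M\<^esub>" "j < s"
  shows "kdiff (koszul_wedge M j c) T = x j \<odot>\<^bsub>M\<^esub> c T"
proof (cases "T \<subseteq> {..<s}")
  case False
  then have "c T = \<zero>\<^bsub>M\<^esub>"
    using koszul_chains_support[OF assms(1)] by blast
  then show ?thesis
    using False x_closed assms(3) by (simp add: koszul_diff_def)
next
  case True
  then show ?thesis
    using koszul_chains_closed[OF assms(1)] assms(2,3)
    by (cases "j \<in> T") (simp_all add: koszul_diff_wedge_in koszul_diff_wedge_notin)
qed

end

section \<open>The double complex \<open>K(x) \<otimes> F \<otimes> M\<close>\<close>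

text \<open>The total complex of the double complex \<open>K(x) \<otimes> F \<otimes> M\<close>, where \<open>F\<close> is a free complex with
  \<open>F\<^sub>p = R\<^bsup>n p\<^esup>\<close> and differentials given by the matrices \<open>d p\<close>.  A chain \<open>w\<close> assigns to \<open>e\<^sub>S \<otimes> f\<^bsub>p,k\<^esub>\<close>
  the coefficient \<open>w S p k\<close>; it has total degree \<open>N\<close> if it is supported on \<open>card S + p = N\<close>.  The
  differential is \<open>d \<otimes> 1 + (-1)\<^sup>p (1 \<otimes> \<partial>)\<close>, written coefficientwise like \<open>koszul_diff\<close>.\<close>

definition total_chains ::
    "('a, 'b, 'd) module_scheme \<Rightarrow> nat \<Rightarrow> (nat \<Rightarrow> nat) \<Rightarrow> nat \<Rightarrow> (nat set \<Rightarrow> nat \<Rightarrow> nat \<Rightarrow> 'b) set" where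
  "total_chains M s n N = {w. (\<forall>S p k. w S p k \<in> carrier M) \<and>
     (\<forall>S p k. w S p k \<noteq> \<zero>\<^bsub>M\<^esub> \<longrightarrow> S \<subseteq> {..<s} \<and> card S + p = N \<and> k < n p)}"

definition total_diff ::
    "('a, 'b, 'd) module_scheme \<Rightarrow> nat \<Rightarrow> (nat \<Rightarrow> 'a) \<Rightarrow> (nat \<Rightarrow> nat) \<Rightarrow> (nat \<Rightarrow> nat \<Rightarrow> nat \<Rightarrow> 'a)
      \<Rightarrow> (nat set \<Rightarrow> nat \<Rightarrow> nat \<Rightarrow> 'b) \<Rightarrow> nat set \<Rightarrow> nat \<Rightarrow> nat \<Rightarrow> 'b" where
  "total_diff M s x n d w = (\<lambda>S p k.
     if S \<subseteq> {..<s} \<and> k < n p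
     then (\<Oplus>\<^bsub>M\<^esub> k'\<in>{..<n (Suc p)}. d (Suc p) k k' \<odot>\<^bsub>M\<^esub> w S (Suc p) k')
            \<oplus>\<^bsub>M\<^esub> signed M (even p) (koszul_diff M s x (\<lambda>S'. w S' p k) S)
     else \<zero>\<^bsub>M\<^esub>)"

lemma total_chainsD:
  assumes "w \<in> total_chains M s n N"
  shows total_chains_closed: "w S p k \<in> carrier M"
    and total_chains_support: "w S p k \<noteq> \<zero>\<^bsub>M\<^esub> \<Longrightarrow> S \<subseteq> {..<s} \<and> card S + p = N \<and> k < n p"
  using assms unfolding total_chains_def by blast+

text \<open>\<open>F\<close> is a complex of free modules with \<open>F\<^sub>0 = R\<close> whose first differential is the row \<open>x\<close>, and
  \<open>F \<otimes> M\<close> is exact in every degree, including \<open>M = im (d 1 \<otimes> M)\<close> in degree \<open>0\<close>.\<close>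

locale koszul_tensor_resolution = koszul R M s x
  for R :: "('a, 'c) ring_scheme" and M :: "('a, 'b, 'd) module_scheme" and s x +
  fixes n :: "nat \<Rightarrow> nat" and d :: "nat \<Rightarrow> nat \<Rightarrow> nat \<Rightarrow> 'a"
  assumes n0: "n 0 = 1" and s_eq: "s = n 1" and x_eq: "\<And>j. x j = d 1 0 j"
    and d_closed: "\<And>p j k. j < n p \<Longrightarrow> k < n (Suc p) \<Longrightarrow> d (Suc p) j k \<in> carrier R"
    and d_comp_d: "\<And>p j k. j < n p \<Longrightarrow> k < n (Suc (Suc p)) \<Longrightarrow>
        (\<Oplus>\<^bsub>R\<^esub> k'\<in>{..<n (Suc p)}. d (Suc p) j k' \<otimes>\<^bsub>R\<^esub> d (Suc (Suc p)) k' k) = \<zero>\<^bsub>R\<^esub>"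
    and tor_exact: "\<And>p v. v \<in> vecs M (n p) \<Longrightarrow>
        (1 \<le> p \<longrightarrow> mat_act M (smult M) (d p) (n (p - 1)) (n p) v = (\<lambda>_. \<zero>\<^bsub>M\<^esub>)) \<Longrightarrow>
        \<exists>u\<in>vecs M (n (Suc p)). mat_act M (smult M) (d (Suc p)) (n p) (n (Suc p)) u = v"
begin

abbreviation tdiff :: "(nat set \<Rightarrow> nat \<Rightarrow> nat \<Rightarrow> 'b) \<Rightarrow> nat set \<Rightarrow> nat \<Rightarrow> nat \<Rightarrow> 'b" where
  "tdiff \<equiv> total_diff M s x n d"

lemma total_chains_add:
  assumes w: "w \<in> total_chains M s n N" and u: "u \<in> total_chains M s n N"
  shows "(\<lambda>S p k. w S p k \<oplus>\<^bsub>M\<^esub> u S p k) \<in> total_chains M s n N"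
proof -
  have wc: "\<And>S p k. w S p k \<in> carrier M" and ws: "\<And>S p k. w S p k \<noteq> \<zero>\<^bsub>M\<^esub> \<Longrightarrow> S \<subseteq> {..<s} \<and> card S + p = N \<and> k < n p"
    using w unfolding total_chains_def by blast+
  have uc: "\<And>S p k. u S p k \<in> carrier M" and us: "\<And>S p k. u S p k \<noteq> \<zero>\<^bsub>M\<^esub> \<Longrightarrow> S \<subseteq> {..<s} \<and> card S + p = N \<and> k < n p"
    using u unfolding total_chains_def by blast+
  have "S \<subseteq> {..<s} \<and> card S + p = N \<and> k < n p" if nz: "w S p k \<oplus>\<^bsub>M\<^esub> u S p k \<noteq> \<zero>\<^bsub>M\<^esub>" for S p k
  proof (cases "w S p k = \<zero>\<^bsub>M\<^esub>")
    case True
    then have "u S p k \<noteq> \<zero>\<^bsub>M\<^esub>" using nz uc by simp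
    then show ?thesis by (rule us)
  next
    case False then show ?thesis by (rule ws)
  qed
  then show ?thesis unfolding total_chains_def using wc uc by auto
qed

lemma total_chains_minus:
  assumes w: "w \<in> total_chains M s n N"
  shows "(\<lambda>S p k. \<ominus>\<^bsub>M\<^esub> w S p k) \<in> total_chains M s n N"
proof -
  have wc: "\<And>S p k. w S p k \<in> carrier M" and ws: "\<And>S p k. w S p k \<noteq> \<zero>\<^bsub>M\<^esub> \<Longrightarrow> S \<subseteq> {..<s} \<and> card S + p = N \<and> k < n p"
    using w unfolding total_chains_def by blast+
  have "S \<subseteq> {..<s} \<and> card S + p = N \<and> k < n p" if nz: "\<ominus>\<^bsub>M\<^esub> w S p k \<noteq> \<zero>\<^bsub>M\<^esub>" for S p k
  proof (rule ws)
    show "w S p k \<noteq> \<zero>\<^bsub>M\<^esub>" using nz by auto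
  qed
  then show ?thesis unfolding total_chains_def using wc by auto
qed

lemma total_chains_zero: "(\<lambda>S p k. \<zero>\<^bsub>M\<^esub>) \<in> total_chains M s n N"
  unfolding total_chains_def by auto

lemma total_diff_closed:
  assumes wc: "\<And>S p k. w S p k \<in> carrier M"
  shows "tdiff w S p k \<in> carrier M"
proof (cases "S \<subseteq> {..<s} \<and> k < n p")
  case True
  have "(\<Oplus>\<^bsub>M\<^esub> k'\<in>{..<n (Suc p)}. d (Suc p) k k' \<odot>\<^bsub>M\<^esub> w S (Suc p) k') \<in> carrier M"
    by (rule M.finsum_closed) (use True in \<open>auto simp: d_closed wc\<close>)
  moreover have "signed M (even p) (kdiff (\<lambda>S'. w S' p k) S) \<in> carrier M"
    by (intro M.signed_closed koszul_diff_closed wc)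
  ultimately show ?thesis using True by (simp add: total_diff_def)
qed (auto simp: total_diff_def)

lemma total_diff_support:
  assumes w: "w \<in> total_chains M s n N'" and nz: "tdiff w S p k \<noteq> \<zero>\<^bsub>M\<^esub>"
  shows "S \<subseteq> {..<s} \<and> Suc (card S + p) = N' \<and> k < n p"
proof -
  have wc: "\<And>S p k. w S p k \<in> carrier M" and ws: "\<And>S p k. w S p k \<noteq> \<zero>\<^bsub>M\<^esub> \<Longrightarrow> S \<subseteq> {..<s} \<and> card S + p = N' \<and> k < n p"
    using w unfolding total_chains_def by blast+
  have Sk: "S \<subseteq> {..<s}" "k < n p" using nz by (auto simp: total_diff_def split: if_splits)
  have fS: "finite S" using Sk finite_subset by blast
  show ?thesis
  proof (rule ccontr)
    assume ne: "\<not> ?thesis"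
    then have ne': "Suc (card S + p) \<noteq> N'" using Sk by blast
    have "(\<Oplus>\<^bsub>M\<^esub> k'\<in>{..<n (Suc p)}. d (Suc p) k k' \<odot>\<^bsub>M\<^esub> w S (Suc p) k') = (\<Oplus>\<^bsub>M\<^esub> k'\<in>{..<n (Suc p)}. \<zero>\<^bsub>M\<^esub>)"
    proof (intro M.finsum_cong'[OF refl])
      fix k' assume k': "k' \<in> {..<n (Suc p)}"
      have "w S (Suc p) k' = \<zero>\<^bsub>M\<^esub>" using ws[of S "Suc p" k'] ne' by auto
      then show "d (Suc p) k k' \<odot>\<^bsub>M\<^esub> w S (Suc p) k' = \<zero>\<^bsub>M\<^esub>" using k' Sk by (simp add: d_closed)
    qed auto
    moreover have "kdiff (\<lambda>S'. w S' p k) S = \<zero>\<^bsub>M\<^esub>"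
    proof (rule koszul_diff_eq_zeroI)
      fix j assume "j < s" "j \<notin> S"
      then have "card (insert j S) + p \<noteq> N'" using ne' fS by simp
      then show "w (insert j S) p k = \<zero>\<^bsub>M\<^esub>" using ws by blast
    qed
    ultimately have "tdiff w S p k = \<zero>\<^bsub>M\<^esub>" using Sk by (simp add: total_diff_def)
    then show False using nz by simp
  qed
qed

lemma total_diff_chains: "w \<in> total_chains M s n (Suc N) \<Longrightarrow> tdiff w \<in> total_chains M s n N"
proof -
  assume w: "w \<in> total_chains M s n (Suc N)"
  have wc: "\<And>S p k. w S p k \<in> carrier M" using w unfolding total_chains_def by blast
  show ?thesis unfolding total_chains_def using total_diff_closed[OF wc] total_diff_support[OF w] by auto
qed


lemma total_diff_eq: "S \<subseteq> {..<s} \<and> k < n p \<Longrightarrow> tdiff w S p k =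
      (\<Oplus>\<^bsub>M\<^esub> k'\<in>{..<n (Suc p)}. d (Suc p) k k' \<odot>\<^bsub>M\<^esub> w S (Suc p) k')
      \<oplus>\<^bsub>M\<^esub> signed M (even p) (kdiff (\<lambda>S'. w S' p k) S)"
  by (simp add: total_diff_def)

lemma total_diff_outside: "\<not> (S \<subseteq> {..<s} \<and> k < n p) \<Longrightarrow> tdiff w S p k = \<zero>\<^bsub>M\<^esub>"
  by (auto simp: total_diff_def)

lemma total_diff_add:
  assumes wc: "\<And>S p k. w S p k \<in> carrier M" and uc: "\<And>S p k. u S p k \<in> carrier M"
  shows "tdiff (\<lambda>S p k. w S p k \<oplus>\<^bsub>M\<^esub> u S p k) S p k = tdiff w S p k \<oplus>\<^bsub>M\<^esub> tdiff u S p k"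
proof (cases "S \<subseteq> {..<s} \<and> k < n p")
  case True
  define a where "a = (\<Oplus>\<^bsub>M\<^esub> k'\<in>{..<n (Suc p)}. d (Suc p) k k' \<odot>\<^bsub>M\<^esub> w S (Suc p) k')"
  define b where "b = (\<Oplus>\<^bsub>M\<^esub> k'\<in>{..<n (Suc p)}. d (Suc p) k k' \<odot>\<^bsub>M\<^esub> u S (Suc p) k')"
  define a' where "a' = signed M (even p) (kdiff (\<lambda>S'. w S' p k) S)"
  define b' where "b' = signed M (even p) (kdiff (\<lambda>S'. u S' p k) S)"
  have cl: "a \<in> carrier M" "b \<in> carrier M" "a' \<in> carrier M" "b' \<in> carrier M"
    unfolding a_def b_def a'_def b'_def using True
    by (auto intro!: M.finsum_closed M.signed_closed koszul_diff_closed simp: wc uc d_closed)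
  have "(\<Oplus>\<^bsub>M\<^esub> k'\<in>{..<n (Suc p)}. d (Suc p) k k' \<odot>\<^bsub>M\<^esub> (w S (Suc p) k' \<oplus>\<^bsub>M\<^esub> u S (Suc p) k'))
     = (\<Oplus>\<^bsub>M\<^esub> k'\<in>{..<n (Suc p)}. d (Suc p) k k' \<odot>\<^bsub>M\<^esub> w S (Suc p) k' \<oplus>\<^bsub>M\<^esub> d (Suc p) k k' \<odot>\<^bsub>M\<^esub> u S (Suc p) k')"
    by (intro M.finsum_cong'[OF refl]) (use True in \<open>auto simp: smult_r_distr wc uc d_closed\<close>)
  also have "\<dots> = a \<oplus>\<^bsub>M\<^esub> b" unfolding a_def b_def
    by (rule M.finsum_addf) (use True in \<open>auto simp: wc uc d_closed\<close>)
  finally have e1: "(\<Oplus>\<^bsub>M\<^esub> k'\<in>{..<n (Suc p)}. d (Suc p) k k' \<odot>\<^bsub>M\<^esub> (w S (Suc p) k' \<oplus>\<^bsub>M\<^esub> u S (Suc p) k')) = a \<oplus>\<^bsub>M\<^esub> b" .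
  have e2: "signed M (even p) (kdiff (\<lambda>S'. w S' p k \<oplus>\<^bsub>M\<^esub> u S' p k) S) = a' \<oplus>\<^bsub>M\<^esub> b'"
    unfolding a'_def b'_def by (simp add: koszul_diff_add wc uc M.signed_add koszul_diff_closed)
  have "tdiff (\<lambda>S p k. w S p k \<oplus>\<^bsub>M\<^esub> u S p k) S p k = (a \<oplus>\<^bsub>M\<^esub> b) \<oplus>\<^bsub>M\<^esub> (a' \<oplus>\<^bsub>M\<^esub> b')"
    using True e1 e2 by (simp add: total_diff_def)
  also have "\<dots> = (a \<oplus>\<^bsub>M\<^esub> a') \<oplus>\<^bsub>M\<^esub> (b \<oplus>\<^bsub>M\<^esub> b')" using cl by (simp add: M.a_ac)
  also have "\<dots> = tdiff w S p k \<oplus>\<^bsub>M\<^esub> tdiff u S p k"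
    using True by (simp add: total_diff_def a_def b_def a'_def b'_def)
  finally show ?thesis .
qed (auto simp: total_diff_def)

lemma total_diff_zero: "tdiff (\<lambda>S p k. \<zero>\<^bsub>M\<^esub>) S p k = \<zero>\<^bsub>M\<^esub>"
proof (cases "S \<subseteq> {..<s} \<and> k < n p")
  case True
  have "(\<Oplus>\<^bsub>M\<^esub> k'\<in>{..<n (Suc p)}. d (Suc p) k k' \<odot>\<^bsub>M\<^esub> \<zero>\<^bsub>M\<^esub>) = (\<Oplus>\<^bsub>M\<^esub> k'\<in>{..<n (Suc p)}. \<zero>\<^bsub>M\<^esub>)"
    by (intro M.finsum_cong'[OF refl]) (use True in \<open>auto simp: d_closed\<close>)
  then show ?thesis using True by (simp add: total_diff_def koszul_diff_zero)
qed (auto simp: total_diff_def)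

lemma total_diff_minus:
  assumes wc: "\<And>S p k. w S p k \<in> carrier M"
  shows "tdiff (\<lambda>S p k. \<ominus>\<^bsub>M\<^esub> w S p k) S p k = \<ominus>\<^bsub>M\<^esub> tdiff w S p k"
proof -
  have nc: "\<And>S p k. \<ominus>\<^bsub>M\<^esub> w S p k \<in> carrier M" using wc by simp
  have "tdiff (\<lambda>S p k. \<ominus>\<^bsub>M\<^esub> w S p k \<oplus>\<^bsub>M\<^esub> w S p k) S p k = tdiff (\<lambda>S p k. \<zero>\<^bsub>M\<^esub>) S p k"
    using wc by (simp add: M.l_neg)
  then have "tdiff (\<lambda>S p k. \<ominus>\<^bsub>M\<^esub> w S p k) S p k \<oplus>\<^bsub>M\<^esub> tdiff w S p k = \<zero>\<^bsub>M\<^esub>"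
    by (simp add: total_diff_add[OF nc wc] total_diff_zero)
  from M.minus_equality[OF this total_diff_closed[OF wc] total_diff_closed[OF nc]] show ?thesis by simp
qed

lemma d_comp_d_smult:
  assumes k: "k < n p" and v: "\<And>k''. k'' < n (Suc (Suc p)) \<Longrightarrow> v k'' \<in> carrier M"
  shows "(\<Oplus>\<^bsub>M\<^esub> k'\<in>{..<n (Suc p)}. d (Suc p) k k' \<odot>\<^bsub>M\<^esub>
           (\<Oplus>\<^bsub>M\<^esub> k''\<in>{..<n (Suc (Suc p))}. d (Suc (Suc p)) k' k'' \<odot>\<^bsub>M\<^esub> v k'')) = \<zero>\<^bsub>M\<^esub>"
proof -
  have dk: "\<And>k'. k' < n (Suc p) \<Longrightarrow> d (Suc p) k k' \<in> carrier R"
    using k by (simp add: d_closed)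
  have "(\<Oplus>\<^bsub>M\<^esub> k'\<in>{..<n (Suc p)}. d (Suc p) k k' \<odot>\<^bsub>M\<^esub>
           (\<Oplus>\<^bsub>M\<^esub> k''\<in>{..<n (Suc (Suc p))}. d (Suc (Suc p)) k' k'' \<odot>\<^bsub>M\<^esub> v k''))
     = (\<Oplus>\<^bsub>M\<^esub> k'\<in>{..<n (Suc p)}. \<Oplus>\<^bsub>M\<^esub> k''\<in>{..<n (Suc (Suc p))}.
           (d (Suc p) k k' \<otimes>\<^bsub>R\<^esub> d (Suc (Suc p)) k' k'') \<odot>\<^bsub>M\<^esub> v k'')"
    using dk by (intro M.finsum_cong'[OF refl])
      (auto intro!: M.finsum_cong' M.finsum_closed simp: finsum_smult_ldistr smult_assoc1 v d_closed)
  also have "\<dots> = (\<Oplus>\<^bsub>M\<^esub> k''\<in>{..<n (Suc (Suc p))}. \<Oplus>\<^bsub>M\<^esub> k'\<in>{..<n (Suc p)}.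
           (d (Suc p) k k' \<otimes>\<^bsub>R\<^esub> d (Suc (Suc p)) k' k'') \<odot>\<^bsub>M\<^esub> v k'')"
    by (rule M.finsum_swap) (use dk in \<open>auto simp: v d_closed\<close>)
  also have "\<dots> = (\<Oplus>\<^bsub>M\<^esub> k''\<in>{..<n (Suc (Suc p))}. \<zero>\<^bsub>M\<^esub>)"
  proof (rule M.finsum_cong'[OF refl])
    fix k'' assume k'': "k'' \<in> {..<n (Suc (Suc p))}"
    have "(\<Oplus>\<^bsub>M\<^esub> k'\<in>{..<n (Suc p)}. (d (Suc p) k k' \<otimes>\<^bsub>R\<^esub> d (Suc (Suc p)) k' k'') \<odot>\<^bsub>M\<^esub> v k'')
       = (\<Oplus>\<^bsub>R\<^esub> k'\<in>{..<n (Suc p)}. d (Suc p) k k' \<otimes>\<^bsub>R\<^esub> d (Suc (Suc p)) k' k'') \<odot>\<^bsub>M\<^esub> v k''"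
      by (rule finsum_smult_rdistr[symmetric]) (use dk k'' in \<open>auto simp: v d_closed\<close>)
    also have "\<dots> = \<zero>\<^bsub>M\<^esub>"
      using d_comp_d[of k p k''] k k'' by (simp add: v)
    finally show "(\<Oplus>\<^bsub>M\<^esub> k'\<in>{..<n (Suc p)}. (d (Suc p) k k' \<otimes>\<^bsub>R\<^esub> d (Suc (Suc p)) k' k'') \<odot>\<^bsub>M\<^esub> v k'') = \<zero>\<^bsub>M\<^esub>" .
  qed auto
  finally show ?thesis
    by simp
qed

text \<open>Applying \<open>d \<otimes> 1\<close> to a total differential leaves only the Koszul part, with the opposite sign.\<close>

lemma resolution_part_total_diff:
  assumes w: "\<And>S p k. w S p k \<in> carrier M" and Sk: "S \<subseteq> {..<s}" "k < n p"
  shows "(\<Oplus>\<^bsub>M\<^esub> k'\<in>{..<n (Suc p)}. d (Suc p) k k' \<odot>\<^bsub>M\<^esub> tdiff w S (Suc p) k')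
    = signed M (odd p) (kdiff (\<lambda>S'. \<Oplus>\<^bsub>M\<^esub> k'\<in>{..<n (Suc p)}. d (Suc p) k k' \<odot>\<^bsub>M\<^esub> w S' (Suc p) k') S)"
proof -
  define W where "W k' = (\<lambda>S'. w S' (Suc p) k')" for k'
  define F where "F k' = (\<Oplus>\<^bsub>M\<^esub> k''\<in>{..<n (Suc (Suc p))}. d (Suc (Suc p)) k' k'' \<odot>\<^bsub>M\<^esub> w S (Suc (Suc p)) k'')"
    for k'
  have W: "\<And>k' S. W k' S \<in> carrier M"
    by (simp add: W_def w)
  have F: "\<And>k'. k' < n (Suc p) \<Longrightarrow> F k' \<in> carrier M"
    unfolding F_def by (rule M.finsum_closed) (auto simp: w d_closed)
  have KW: "\<And>k'. kdiff (W k') S \<in> carrier M"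
    by (rule koszul_diff_closed[OF W])
  have dk: "\<And>k'. k' < n (Suc p) \<Longrightarrow> d (Suc p) k k' \<in> carrier R"
    using Sk by (simp add: d_closed)
  have "(\<Oplus>\<^bsub>M\<^esub> k'\<in>{..<n (Suc p)}. d (Suc p) k k' \<odot>\<^bsub>M\<^esub> tdiff w S (Suc p) k')
      = (\<Oplus>\<^bsub>M\<^esub> k'\<in>{..<n (Suc p)}. d (Suc p) k k' \<odot>\<^bsub>M\<^esub> F k' \<oplus>\<^bsub>M\<^esub>
           signed M (odd p) (d (Suc p) k k' \<odot>\<^bsub>M\<^esub> kdiff (W k') S))"
    using Sk F dk KW
    by (intro M.finsum_cong'[OF refl]) (auto simp: total_diff_def F_def W_def smult_r_distr smult_signed)
  also have "\<dots> = (\<Oplus>\<^bsub>M\<^esub> k'\<in>{..<n (Suc p)}. d (Suc p) k k' \<odot>\<^bsub>M\<^esub> F k') \<oplus>\<^bsub>M\<^esub>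
       (\<Oplus>\<^bsub>M\<^esub> k'\<in>{..<n (Suc p)}. signed M (odd p) (d (Suc p) k k' \<odot>\<^bsub>M\<^esub> kdiff (W k') S))"
    by (rule M.finsum_addf) (use F dk KW in auto)
  also have "(\<Oplus>\<^bsub>M\<^esub> k'\<in>{..<n (Suc p)}. d (Suc p) k k' \<odot>\<^bsub>M\<^esub> F k') = \<zero>\<^bsub>M\<^esub>"
    unfolding F_def using Sk by (intro d_comp_d_smult) (simp_all add: w)
  also have "(\<Oplus>\<^bsub>M\<^esub> k'\<in>{..<n (Suc p)}. signed M (odd p) (d (Suc p) k k' \<odot>\<^bsub>M\<^esub> kdiff (W k') S))
      = signed M (odd p) (\<Oplus>\<^bsub>M\<^esub> k'\<in>{..<n (Suc p)}. kdiff (\<lambda>S'. d (Suc p) k k' \<odot>\<^bsub>M\<^esub> W k' S') S)"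
  proof -
    have "(\<Oplus>\<^bsub>M\<^esub> k'\<in>{..<n (Suc p)}. signed M (odd p) (d (Suc p) k k' \<odot>\<^bsub>M\<^esub> kdiff (W k') S))
        = (\<Oplus>\<^bsub>M\<^esub> k'\<in>{..<n (Suc p)}. signed M (odd p) (kdiff (\<lambda>S'. d (Suc p) k k' \<odot>\<^bsub>M\<^esub> W k' S') S))"
      by (intro M.finsum_cong'[OF refl]) (use dk W in \<open>auto simp: koszul_diff_smult koszul_diff_closed\<close>)
    then show ?thesis
      by (simp add: M.finsum_signed dk W koszul_diff_closed)
  qed
  also have "(\<Oplus>\<^bsub>M\<^esub> k'\<in>{..<n (Suc p)}. kdiff (\<lambda>S'. d (Suc p) k k' \<odot>\<^bsub>M\<^esub> W k' S') S)
      = kdiff (\<lambda>S'. \<Oplus>\<^bsub>M\<^esub> k'\<in>{..<n (Suc p)}. d (Suc p) k k' \<odot>\<^bsub>M\<^esub> w S' (Suc p) k') S"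
    unfolding W_def by (rule koszul_diff_finsum[symmetric]) (use dk w in auto)
  finally have "(\<Oplus>\<^bsub>M\<^esub> k'\<in>{..<n (Suc p)}. d (Suc p) k k' \<odot>\<^bsub>M\<^esub> tdiff w S (Suc p) k') = \<zero>\<^bsub>M\<^esub> \<oplus>\<^bsub>M\<^esub>
      signed M (odd p) (kdiff (\<lambda>S'. \<Oplus>\<^bsub>M\<^esub> k'\<in>{..<n (Suc p)}. d (Suc p) k k' \<odot>\<^bsub>M\<^esub> w S' (Suc p) k') S)" .
  moreover have "kdiff (\<lambda>S'. \<Oplus>\<^bsub>M\<^esub> k'\<in>{..<n (Suc p)}. d (Suc p) k k' \<odot>\<^bsub>M\<^esub> w S' (Suc p) k') S \<in> carrier M"
    by (rule koszul_diff_closed, rule M.finsum_closed) (use dk w in auto)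
  ultimately show ?thesis
    by simp
qed

lemma total_diff_squared:
  assumes w: "\<And>S p k. w S p k \<in> carrier M"
  shows "tdiff (tdiff w) S p k = \<zero>\<^bsub>M\<^esub>"
proof (cases "S \<subseteq> {..<s} \<and> k < n p")
  case True
  define G where "G S' = (\<Oplus>\<^bsub>M\<^esub> k'\<in>{..<n (Suc p)}. d (Suc p) k k' \<odot>\<^bsub>M\<^esub> w S' (Suc p) k')" for S'
  have G: "\<And>S'. G S' \<in> carrier M"
    unfolding G_def by (rule M.finsum_closed) (use True in \<open>auto simp: w d_closed\<close>)
  define K where "K = kdiff G S"
  have K: "K \<in> carrier M"
    unfolding K_def by (rule koszul_diff_closed[OF G])
  have "kdiff (\<lambda>S'. tdiff w S' p k) S
      = kdiff (\<lambda>S'. G S' \<oplus>\<^bsub>M\<^esub> signed M (even p) (kdiff (\<lambda>S''. w S'' p k) S')) S"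
    by (rule koszul_diff_cong) (use True G w koszul_diff_closed in \<open>auto simp: total_diff_def G_def\<close>)
  also have "\<dots> = K \<oplus>\<^bsub>M\<^esub> kdiff (\<lambda>S'. signed M (even p) (kdiff (\<lambda>S''. w S'' p k) S')) S"
    unfolding K_def by (rule koszul_diff_add) (use G w koszul_diff_closed in auto)
  also have "kdiff (\<lambda>S'. signed M (even p) (kdiff (\<lambda>S''. w S'' p k) S')) S = \<zero>\<^bsub>M\<^esub>"
    using w by (simp add: koszul_diff_signed koszul_diff_closed koszul_diff_squared)
  finally have "kdiff (\<lambda>S'. tdiff w S' p k) S = K"
    using K by simp
  moreover have "(\<Oplus>\<^bsub>M\<^esub> k'\<in>{..<n (Suc p)}. d (Suc p) k k' \<odot>\<^bsub>M\<^esub> tdiff w S (Suc p) k') = signed M (odd p) K"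
    unfolding K_def G_def using True by (intro resolution_part_total_diff[OF w]) simp_all
  ultimately show ?thesis
    using M.signed_cancel[OF K, of "even p"] K by (simp add: total_diff_eq[OF True] M.a_comm)
qed (rule total_diff_outside)

text \<open>A total cycle supported on \<open>card S \<le> q\<close> restricts, on each \<open>S\<close> of size \<open>q\<close>, to a cycle of
  \<open>F \<otimes> M\<close>: the Koszul part of its boundary at \<open>S\<close> only sees index sets of size \<open>q + 1\<close>.\<close>

lemma total_cycle_top_slice:
  assumes z: "\<And>S p k. z S p k \<in> carrier M" and cycle: "\<And>S p k. tdiff z S p k = \<zero>\<^bsub>M\<^esub>"
    and level: "\<And>S p k. z S p k \<noteq> \<zero>\<^bsub>M\<^esub> \<Longrightarrow> card S \<le> q" and S: "S \<subseteq> {..<s}" "card S = q"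
  shows "mat_act M (smult M) (d (Suc p)) (n p) (n (Suc p)) (\<lambda>k. z S (Suc p) k) = (\<lambda>_. \<zero>\<^bsub>M\<^esub>)"
proof
  fix j
  show "mat_act M (smult M) (d (Suc p)) (n p) (n (Suc p)) (\<lambda>k. z S (Suc p) k) j = \<zero>\<^bsub>M\<^esub>"
  proof (cases "j < n p")
    case True
    have "kdiff (\<lambda>S'. z S' p j) S = \<zero>\<^bsub>M\<^esub>"
    proof (rule koszul_diff_eq_zeroI)
      fix i assume "i \<notin> S"
      then have "card (insert i S) = Suc q"
        using S finite_subset by fastforce
      then show "z (insert i S) p j = \<zero>\<^bsub>M\<^esub>"
        using level[of "insert i S" p j] by auto
    qed
    then have "tdiff z S p j = (\<Oplus>\<^bsub>M\<^esub> k'\<in>{..<n (Suc p)}. d (Suc p) j k' \<odot>\<^bsub>M\<^esub> z S (Suc p) k')"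
      using True S z by (simp add: total_diff_eq M.finsum_closed Pi_def d_closed)
    then show ?thesis
      using True cycle by (simp add: mat_act_def)
  qed (simp add: mat_act_def)
qed

lemma total_diff_lift_slice:
  assumes u: "\<And>S. S \<subseteq> {..<s} \<Longrightarrow> card S = q \<Longrightarrow> u S \<in> vecs M (n (Suc p0))" and S: "q \<le> card S"
  shows "tdiff (\<lambda>S p k. if S \<subseteq> {..<s} \<and> card S = q \<and> p = Suc p0 then u S k else \<zero>\<^bsub>M\<^esub>) S p k
    = (if S \<subseteq> {..<s} \<and> card S = q \<and> p = p0
       then mat_act M (smult M) (d (Suc p0)) (n p0) (n (Suc p0)) (u S) k else \<zero>\<^bsub>M\<^esub>)"
    (is "tdiff ?U S p k = _")
proof (cases "S \<subseteq> {..<s} \<and> k < n p")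
  case Sk: True
  have u_closed: "\<And>S k. S \<subseteq> {..<s} \<Longrightarrow> card S = q \<Longrightarrow> u S k \<in> carrier M"
    using u unfolding vecs_def by (case_tac "k < n (Suc p0)") auto
  have "kdiff (\<lambda>S'. ?U S' p k) S = \<zero>\<^bsub>M\<^esub>"
  proof (rule koszul_diff_eq_zeroI)
    fix i assume "i \<notin> S"
    then have "card (insert i S) = Suc (card S)"
      using Sk finite_subset by fastforce
    then show "?U (insert i S) p k = \<zero>\<^bsub>M\<^esub>"
      using S by auto
  qed
  then have "tdiff ?U S p k = (\<Oplus>\<^bsub>M\<^esub> k'\<in>{..<n (Suc p)}. d (Suc p) k k' \<odot>\<^bsub>M\<^esub> ?U S (Suc p) k')"
    using Sk u_closed by (simp add: total_diff_eq M.finsum_closed Pi_def d_closed)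
  also have "\<dots> = (if S \<subseteq> {..<s} \<and> card S = q \<and> p = p0
       then mat_act M (smult M) (d (Suc p0)) (n p0) (n (Suc p0)) (u S) k else \<zero>\<^bsub>M\<^esub>)"
  proof (cases "card S = q \<and> p = p0")
    case True
    then show ?thesis
      using Sk by (simp add: mat_act_def)
  next
    case False
    have "(\<Oplus>\<^bsub>M\<^esub> k'\<in>{..<n (Suc p)}. d (Suc p) k k' \<odot>\<^bsub>M\<^esub> ?U S (Suc p) k') = (\<Oplus>\<^bsub>M\<^esub> k'\<in>{..<n (Suc p)}. \<zero>\<^bsub>M\<^esub>)"
      using False Sk by (intro M.finsum_cong'[OF refl]) (auto simp: d_closed)
    moreover have "\<not> (S \<subseteq> {..<s} \<and> card S = q \<and> p = p0)"
      using False by blast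
    ultimately show ?thesis
      by (simp only: if_not_P if_False M.finsum_zero)
  qed
  finally show ?thesis .
qed (auto simp: total_diff_outside mat_act_def)

lemma total_cycle_lift_top_level:
  assumes z: "z \<in> total_chains M s n N" and cycle: "\<And>S p k. tdiff z S p k = \<zero>\<^bsub>M\<^esub>"
    and level: "\<And>S p k. z S p k \<noteq> \<zero>\<^bsub>M\<^esub> \<Longrightarrow> card S \<le> q" and "q \<le> N"
  obtains U where "U \<in> total_chains M s n (Suc N)" "\<And>S p k. q \<le> card S \<Longrightarrow> tdiff U S p k = z S p k"
proof -
  define p0 where "p0 = N - q"
  have zc: "\<And>S p k. z S p k \<in> carrier M"
    using z by (rule total_chains_closed)
  have zs: "\<And>S p k. z S p k \<noteq> \<zero>\<^bsub>M\<^esub> \<Longrightarrow> S \<subseteq> {..<s} \<and> card S + p = N \<and> k < n p"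
    using z by (rule total_chains_support)
  have "\<exists>u. u \<in> vecs M (n (Suc p0)) \<and> mat_act M (smult M) (d (Suc p0)) (n p0) (n (Suc p0)) u = (\<lambda>k. z S p0 k)"
    if S: "S \<subseteq> {..<s}" "card S = q" for S
  proof (rule tor_exact[unfolded Bex_def])
    show "(\<lambda>k. z S p0 k) \<in> vecs M (n p0)"
      unfolding vecs_def using zc zs by (auto, meson not_le)
    show "1 \<le> p0 \<longrightarrow> mat_act M (smult M) (d p0) (n (p0 - 1)) (n p0) (\<lambda>k. z S p0 k) = (\<lambda>_. \<zero>\<^bsub>M\<^esub>)"
      using total_cycle_top_slice[OF zc cycle level S, where p = "p0 - 1"] by (cases p0) simp_all
  qed
  then obtain u where u: "\<And>S. S \<subseteq> {..<s} \<Longrightarrow> card S = q \<Longrightarrow> u S \<in> vecs M (n (Suc p0)) \<and>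
      mat_act M (smult M) (d (Suc p0)) (n p0) (n (Suc p0)) (u S) = (\<lambda>k. z S p0 k)"
    by metis
  define U where "U S p k = (if S \<subseteq> {..<s} \<and> card S = q \<and> p = Suc p0 then u S k else \<zero>\<^bsub>M\<^esub>)" for S p k
  have u_closed: "\<And>S k. S \<subseteq> {..<s} \<Longrightarrow> card S = q \<Longrightarrow> u S k \<in> carrier M"
    and u_support: "\<And>S k. S \<subseteq> {..<s} \<Longrightarrow> card S = q \<Longrightarrow> u S k \<noteq> \<zero>\<^bsub>M\<^esub> \<Longrightarrow> k < n (Suc p0)"
    using u unfolding vecs_def by (case_tac [!] "k < n (Suc p0)") auto
  have "U \<in> total_chains M s n (Suc N)"
    unfolding total_chains_def U_def using u_closed u_support \<open>q \<le> N\<close> by (auto simp: p0_def)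
  moreover have "tdiff U S p k = z S p k" if S: "q \<le> card S" for S p k
  proof -
    have "z S p k = \<zero>\<^bsub>M\<^esub>" if "\<not> (S \<subseteq> {..<s} \<and> card S = q \<and> p = p0)"
    proof (rule ccontr)
      assume "z S p k \<noteq> \<zero>\<^bsub>M\<^esub>"
      then show False
        using zs level S that unfolding p0_def by fastforce
    qed
    moreover have "\<And>S. S \<subseteq> {..<s} \<Longrightarrow> card S = q \<Longrightarrow> u S \<in> vecs M (n (Suc p0))"
      using u by blast
    from total_diff_lift_slice[OF this S] have "tdiff U S p k = (if S \<subseteq> {..<s} \<and> card S = q \<and> p = p0
        then mat_act M (smult M) (d (Suc p0)) (n p0) (n (Suc p0)) (u S) k else \<zero>\<^bsub>M\<^esub>)"
      unfolding U_def .
    ultimately show ?thesis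
      using u by auto
  qed
  ultimately show ?thesis
    using that by blast
qed

lemma total_cycle_is_boundary_below:
  assumes "z \<in> total_chains M s n N" "\<And>S p k. tdiff z S p k = \<zero>\<^bsub>M\<^esub>"
    and "\<And>S p k. z S p k \<noteq> \<zero>\<^bsub>M\<^esub> \<Longrightarrow> card S < q"
  shows "\<exists>u \<in> total_chains M s n (Suc N). \<forall>S p k. z S p k = tdiff u S p k"
  using assms
proof (induction q arbitrary: z)
  case 0
  then have "\<And>S p k. z S p k = \<zero>\<^bsub>M\<^esub>"
    by blast
  then have "\<And>S p k. z S p k = tdiff (\<lambda>S p k. \<zero>\<^bsub>M\<^esub>) S p k"
    by (simp add: total_diff_zero)
  then show ?case
    using total_chains_zero by blast
next
  case (Suc q)
  have zc: "\<And>S p k. z S p k \<in> carrier M"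
    using Suc.prems(1) by (rule total_chains_closed)
  show ?case
  proof (cases "q \<le> N")
    case False
    then have "\<And>S p k. z S p k \<noteq> \<zero>\<^bsub>M\<^esub> \<Longrightarrow> card S < q"
      using total_chains_support[OF Suc.prems(1)] by fastforce
    then show ?thesis
      using Suc.IH Suc.prems(1,2) by blast
  next
    case True
    obtain U where U: "U \<in> total_chains M s n (Suc N)" and DU: "\<And>S p k. q \<le> card S \<Longrightarrow> tdiff U S p k = z S p k"
      using total_cycle_lift_top_level[OF Suc.prems(1,2) _ True] Suc.prems(3) less_Suc_eq_le by blast
    have Uc: "\<And>S p k. U S p k \<in> carrier M" and DUc: "\<And>S p k. tdiff U S p k \<in> carrier M"
      using total_chains_closed[OF U] total_diff_closed by blast+
    define z' where "z' S p k = z S p k \<oplus>\<^bsub>M\<^esub> \<ominus>\<^bsub>M\<^esub> tdiff U S p k" for S p k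
    have "z' \<in> total_chains M s n N"
      unfolding z'_def by (intro total_chains_add Suc.prems(1) total_chains_minus total_diff_chains U)
    moreover have "tdiff z' S p k = \<zero>\<^bsub>M\<^esub>" for S p k
      unfolding z'_def using Suc.prems(2) zc DUc Uc
      by (simp add: total_diff_add total_diff_minus total_diff_squared)
    moreover have "card S < q" if "z' S p k \<noteq> \<zero>\<^bsub>M\<^esub>" for S p k
      using that DU zc Suc.prems(3)[of S p k] unfolding z'_def by (cases "q \<le> card S") (auto simp: M.r_neg)
    ultimately obtain u' where u': "u' \<in> total_chains M s n (Suc N)" "\<And>S p k. z' S p k = tdiff u' S p k"
      using Suc.IH by blast
    have boundary: "tdiff (\<lambda>S p k. U S p k \<oplus>\<^bsub>M\<^esub> u' S p k) S p k = z S p k" for S p k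
    proof -
      have "tdiff (\<lambda>S p k. U S p k \<oplus>\<^bsub>M\<^esub> u' S p k) S p k = tdiff U S p k \<oplus>\<^bsub>M\<^esub> z' S p k"
        using u'(2) total_chains_closed[OF u'(1)] Uc by (simp add: total_diff_add)
      also have "\<dots> = z S p k \<oplus>\<^bsub>M\<^esub> (tdiff U S p k \<oplus>\<^bsub>M\<^esub> \<ominus>\<^bsub>M\<^esub> tdiff U S p k)"
        unfolding z'_def using zc DUc by (simp add: M.a_lcomm)
      finally show ?thesis
        using zc DUc by (simp add: M.r_neg)
    qed
    show ?thesis
    proof
      show "(\<lambda>S p k. U S p k \<oplus>\<^bsub>M\<^esub> u' S p k) \<in> total_chains M s n (Suc N)"
        by (rule total_chains_add[OF U u'(1)])
    qed (simp add: boundary)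
  qed
qed

lemma total_complex_exact:
  assumes "z \<in> total_chains M s n N" "\<And>S p k. tdiff z S p k = \<zero>\<^bsub>M\<^esub>"
  shows "\<exists>u \<in> total_chains M s n (Suc N). \<forall>S p k. z S p k = tdiff u S p k"
proof (rule total_cycle_is_boundary_below[OF assms])
  fix S p k assume "z S p k \<noteq> \<zero>\<^bsub>M\<^esub>"
  then have "card S + p = N"
    using total_chains_support[OF assms(1)] by blast
  then show "card S < Suc N"
    by simp
qed

section \<open>Exactness of the Koszul complex\<close>

definition koszul_exact_at :: "nat \<Rightarrow> bool" where
  "koszul_exact_at N \<longleftrightarrow> (\<forall>c \<in> koszul_chains M s N. (\<forall>T. kdiff c T = \<zero>\<^bsub>M\<^esub>) \<longrightarrow>
     (\<exists>b \<in> koszul_chains M s (Suc N). \<forall>T. c T = kdiff b T))"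

lemma total_slice_koszul_cycle:
  assumes w: "w \<in> total_chains M s n N" and cycle: "\<And>S k. tdiff w S p k = \<zero>\<^bsub>M\<^esub>"
    and above: "\<And>S k. w S (Suc p) k = \<zero>\<^bsub>M\<^esub>"
  shows "kdiff (\<lambda>S. w S p k) T = \<zero>\<^bsub>M\<^esub>"
proof (cases "k < n p")
  case True
  note wc = total_chains_closed[OF w]
  show ?thesis
  proof (cases "T \<subseteq> {..<s}")
    case T: True
    have "(\<Oplus>\<^bsub>M\<^esub> k'\<in>{..<n (Suc p)}. d (Suc p) k k' \<odot>\<^bsub>M\<^esub> w T (Suc p) k') = (\<Oplus>\<^bsub>M\<^esub> k'\<in>{..<n (Suc p)}. \<zero>\<^bsub>M\<^esub>)"
      using True by (intro M.finsum_cong'[OF refl]) (auto simp: above d_closed)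
    then have "tdiff w T p k = signed M (even p) (kdiff (\<lambda>S. w S p k) T)"
      using T True wc by (simp add: total_diff_eq koszul_diff_closed)
    then have "signed M (even p) (kdiff (\<lambda>S. w S p k) T) = \<zero>\<^bsub>M\<^esub>"
      using cycle[of T k] by simp
    then show ?thesis
      using koszul_diff_closed[of "\<lambda>S. w S p k" T] wc by (simp add: M.signed_eq_zero_iff)
  qed (simp add: koszul_diff_def)
next
  case False
  have "(\<lambda>S. w S p k) = (\<lambda>S. \<zero>\<^bsub>M\<^esub>)"
  proof
    fix S
    show "w S p k = \<zero>\<^bsub>M\<^esub>"
      using total_chains_support[OF w, of S p k] False by blast
  qed
  then show ?thesis
    by (simp add: koszul_diff_zero)
qed

lemma total_level_slice:
  assumes w: "w \<in> total_chains M s n (Suc N)" and cycle: "\<And>S p k. p \<noteq> 0 \<Longrightarrow> tdiff w S p k = \<zero>\<^bsub>M\<^esub>"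
    and level: "\<And>S p k. w S p k \<noteq> \<zero>\<^bsub>M\<^esub> \<Longrightarrow> q \<le> card S" and "q \<le> N"
  shows total_level_slice_chains: "(\<lambda>S. w S (Suc N - q) k) \<in> koszul_chains M s q"
    and total_level_slice_cycle: "kdiff (\<lambda>S. w S (Suc N - q) k) T = \<zero>\<^bsub>M\<^esub>"
proof -
  note ws = total_chains_support[OF w]
  have "S \<subseteq> {..<s} \<and> card S = q" if "w S (Suc N - q) k \<noteq> \<zero>\<^bsub>M\<^esub>" for S k
    using ws[OF that] \<open>q \<le> N\<close> by auto
  then show "(\<lambda>S. w S (Suc N - q) k) \<in> koszul_chains M s q"
    unfolding koszul_chains_def using total_chains_closed[OF w] by blast
  show "kdiff (\<lambda>S. w S (Suc N - q) k) T = \<zero>\<^bsub>M\<^esub>"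
  proof (rule total_slice_koszul_cycle[OF w])
    show "\<And>S k. tdiff w S (Suc N - q) k = \<zero>\<^bsub>M\<^esub>"
      using cycle \<open>q \<le> N\<close> by simp
    show "w S (Suc (Suc N - q)) k = \<zero>\<^bsub>M\<^esub>" for S k
    proof (rule ccontr)
      assume "w S (Suc (Suc N - q)) k \<noteq> \<zero>\<^bsub>M\<^esub>"
      then have "card S + Suc (Suc N - q) = Suc N" "q \<le> card S"
        using ws level by blast+
      then show False
        using \<open>q \<le> N\<close> by simp
    qed
  qed
qed

lemma total_diff_koszul_lift:
  assumes b: "\<And>k. b k \<in> koszul_chains M s (Suc q)" and S: "card S \<le> q"
  shows "tdiff (\<lambda>S p' k. if p' = p \<and> k < n p then signed M (even p) (b k S) else \<zero>\<^bsub>M\<^esub>) S p' k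
    = (if S \<subseteq> {..<s} \<and> p' = p \<and> k < n p then kdiff (b k) S else \<zero>\<^bsub>M\<^esub>)"
    (is "tdiff ?u S p' k = _")
proof (cases "S \<subseteq> {..<s} \<and> k < n p'")
  case Sk: True
  note bc = koszul_chains_closed[OF b]
  have "b k' S = \<zero>\<^bsub>M\<^esub>" for k'
    using koszul_chains_support[OF b, of k' S] S by (cases "b k' S = \<zero>\<^bsub>M\<^esub>") auto
  then have "(\<Oplus>\<^bsub>M\<^esub> k'\<in>{..<n (Suc p')}. d (Suc p') k k' \<odot>\<^bsub>M\<^esub> ?u S (Suc p') k')
      = (\<Oplus>\<^bsub>M\<^esub> k'\<in>{..<n (Suc p')}. \<zero>\<^bsub>M\<^esub>)"
    using Sk by (intro M.finsum_cong'[OF refl]) (auto simp: d_closed)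
  then have "(\<Oplus>\<^bsub>M\<^esub> k'\<in>{..<n (Suc p')}. d (Suc p') k k' \<odot>\<^bsub>M\<^esub> ?u S (Suc p') k') = \<zero>\<^bsub>M\<^esub>"
    by simp
  moreover have "signed M (even p') (kdiff (\<lambda>S'. ?u S' p' k) S)
      = (if p' = p then kdiff (b k) S else \<zero>\<^bsub>M\<^esub>)"
  proof (cases "p' = p")
    case True
    then have "(\<lambda>S'. ?u S' p' k) = (\<lambda>S'. signed M (even p) (b k S'))"
      using Sk by auto
    then show ?thesis
      using True bc by (simp add: koszul_diff_signed M.signed_signed koszul_diff_closed)
  qed (simp add: koszul_diff_zero)
  ultimately show ?thesis
    using Sk bc by (auto simp: total_diff_eq koszul_diff_closed)
qed (auto simp: total_diff_outside)

lemma total_preimage_raise_level: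
  assumes exact: "koszul_exact_at q" and "q < N"
    and w: "w \<in> total_chains M s n (Suc N)" and cycle: "\<And>S p k. p \<noteq> 0 \<Longrightarrow> tdiff w S p k = \<zero>\<^bsub>M\<^esub>"
    and level: "\<And>S p k. w S p k \<noteq> \<zero>\<^bsub>M\<^esub> \<Longrightarrow> q \<le> card S"
  shows "\<exists>w' \<in> total_chains M s n (Suc N). (\<forall>S p k. tdiff w' S p k = tdiff w S p k) \<and>
     (\<forall>S p k. w' S p k \<noteq> \<zero>\<^bsub>M\<^esub> \<longrightarrow> Suc q \<le> card S)"
proof -
  define p where "p = Suc N - q"
  have wc: "\<And>S p k. w S p k \<in> carrier M"
    using w by (rule total_chains_closed)
  have ws: "\<And>S p k. w S p k \<noteq> \<zero>\<^bsub>M\<^esub> \<Longrightarrow> S \<subseteq> {..<s} \<and> card S + p = Suc N \<and> k < n p"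
    using w by (rule total_chains_support)
  have slice_chain: "(\<lambda>S. w S p k) \<in> koszul_chains M s q" for k
    using total_level_slice_chains[OF w cycle level less_imp_le[OF \<open>q < N\<close>]] by (simp add: p_def)
  have slice_cycle: "kdiff (\<lambda>S. w S p k) T = \<zero>\<^bsub>M\<^esub>" for k T
    using total_level_slice_cycle[OF w cycle level less_imp_le[OF \<open>q < N\<close>]] by (simp add: p_def)
  have "\<forall>k. \<exists>b. b \<in> koszul_chains M s (Suc q) \<and> (\<forall>T. w T p k = kdiff b T)"
    using exact slice_chain slice_cycle unfolding koszul_exact_at_def by blast
  from choice[OF this] obtain b
    where "\<forall>k. b k \<in> koszul_chains M s (Suc q) \<and> (\<forall>T. w T p k = kdiff (b k) T)"
    by blast
  then have b: "\<And>k. b k \<in> koszul_chains M s (Suc q)" and wb: "\<And>k T. w T p k = kdiff (b k) T"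
    by blast+
  note bc = koszul_chains_closed[OF b]
  define u where "u S p' k = (if p' = p \<and> k < n p then signed M (even p) (b k S) else \<zero>\<^bsub>M\<^esub>)" for S p' k
  have uc: "\<And>S p k. u S p k \<in> carrier M"
    by (simp add: u_def bc)
  have "S \<subseteq> {..<s} \<and> card S + p' = Suc (Suc N) \<and> k < n p'" if "u S p' k \<noteq> \<zero>\<^bsub>M\<^esub>" for S p' k
  proof -
    have "p' = p" "k < n p" "b k S \<noteq> \<zero>\<^bsub>M\<^esub>"
      using that by (auto simp: u_def split: if_splits)
    then show ?thesis
      using koszul_chains_support[OF b] \<open>q < N\<close> by (auto simp: p_def)
  qed
  then have u: "u \<in> total_chains M s n (Suc (Suc N))"
    unfolding total_chains_def using uc by blast
  have Du: "tdiff u S p' k = w S p' k" if "card S \<le> q" for S p' k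
  proof -
    have "tdiff u S p' k = (if S \<subseteq> {..<s} \<and> p' = p \<and> k < n p then kdiff (b k) S else \<zero>\<^bsub>M\<^esub>)"
      unfolding u_def using b that by (rule total_diff_koszul_lift)
    also have "\<dots> = w S p' k"
    proof (cases "S \<subseteq> {..<s} \<and> p' = p \<and> k < n p")
      case False
      have "w S p' k = \<zero>\<^bsub>M\<^esub>"
      proof (rule ccontr)
        assume nz: "w S p' k \<noteq> \<zero>\<^bsub>M\<^esub>"
        then have "card S = q"
          using level[OF nz] that by simp
        then have "p' = p"
          using ws[OF nz] by (auto simp: p_def)
        then show False
          using ws[OF nz] False by simp
      qed
      then show ?thesis
        using False by auto
    qed (simp add: wb)
    finally show ?thesis .
  qed
  define w' where "w' S p k = w S p k \<oplus>\<^bsub>M\<^esub> \<ominus>\<^bsub>M\<^esub> tdiff u S p k" for S p k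
  have "w' \<in> total_chains M s n (Suc N)"
    unfolding w'_def by (intro total_chains_add w total_chains_minus total_diff_chains u)
  moreover have "tdiff w' S p k = tdiff w S p k" for S p k
    unfolding w'_def using wc uc total_diff_closed[of u, OF uc] total_diff_closed[of w, OF wc]
    by (simp add: total_diff_add total_diff_minus total_diff_squared)
  moreover have "Suc q \<le> card S" if "w' S p k \<noteq> \<zero>\<^bsub>M\<^esub>" for S p k
    using that Du[of S p k] wc by (cases "card S \<le> q") (auto simp: w'_def M.r_neg)
  ultimately show ?thesis
    by blast
qed

lemma total_preimage_above_level:
  assumes exact: "\<And>q. q < N \<Longrightarrow> koszul_exact_at q"
    and w: "w \<in> total_chains M s n (Suc N)" and cycle: "\<And>S p k. p \<noteq> 0 \<Longrightarrow> tdiff w S p k = \<zero>\<^bsub>M\<^esub>"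
  shows "q \<le> N \<Longrightarrow> \<exists>w' \<in> total_chains M s n (Suc N). (\<forall>S p k. tdiff w' S p k = tdiff w S p k) \<and>
     (\<forall>S p k. w' S p k \<noteq> \<zero>\<^bsub>M\<^esub> \<longrightarrow> q \<le> card S)"
proof (induction q)
  case 0
  then show ?case
    using w by blast
next
  case (Suc q)
  then obtain w1 where w1: "w1 \<in> total_chains M s n (Suc N)" "\<forall>S p k. tdiff w1 S p k = tdiff w S p k"
    "\<forall>S p k. w1 S p k \<noteq> \<zero>\<^bsub>M\<^esub> \<longrightarrow> q \<le> card S"
    by auto
  have q: "q < N"
    using Suc.prems by simp
  have "\<exists>w' \<in> total_chains M s n (Suc N). (\<forall>S p k. tdiff w' S p k = tdiff w1 S p k) \<and>
      (\<forall>S p k. w' S p k \<noteq> \<zero>\<^bsub>M\<^esub> \<longrightarrow> Suc q \<le> card S)"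
  proof (rule total_preimage_raise_level[OF exact[OF q] q w1(1)])
    show "\<And>S p k. p \<noteq> 0 \<Longrightarrow> tdiff w1 S p k = \<zero>\<^bsub>M\<^esub>"
      using w1(2) cycle by simp
    show "\<And>S p k. w1 S p k \<noteq> \<zero>\<^bsub>M\<^esub> \<Longrightarrow> q \<le> card S"
      using w1(3) by blast
  qed
  then show ?case
    using w1(2) by auto
qed

lemma koszul_cycle_total_preimage:
  assumes exact: "\<And>q. q < N \<Longrightarrow> koszul_exact_at q"
    and c: "c \<in> koszul_chains M s N" and cycle: "\<And>T. kdiff c T = \<zero>\<^bsub>M\<^esub>"
  obtains w where "w \<in> total_chains M s n (Suc N)"
    "\<And>S p k. tdiff w S p k = (if p = 0 \<and> k = 0 then c S else \<zero>\<^bsub>M\<^esub>)"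
    "\<And>S p k. w S p k \<noteq> \<zero>\<^bsub>M\<^esub> \<Longrightarrow> N \<le> card S"
proof -
  define z where "z S p k = (if p = 0 \<and> k = 0 then c S else \<zero>\<^bsub>M\<^esub>)" for S and p k :: nat
  have cc: "\<And>S. c S \<in> carrier M"
    using c by (rule koszul_chains_closed)
  have z: "z \<in> total_chains M s n N"
    unfolding total_chains_def z_def using cc koszul_chains_support[OF c] n0 by auto
  have "tdiff z S p k = \<zero>\<^bsub>M\<^esub>" for S p k
  proof (cases "S \<subseteq> {..<s} \<and> k < n p")
    case True
    have "(\<Oplus>\<^bsub>M\<^esub> k'\<in>{..<n (Suc p)}. d (Suc p) k k' \<odot>\<^bsub>M\<^esub> z S (Suc p) k') = (\<Oplus>\<^bsub>M\<^esub> k'\<in>{..<n (Suc p)}. \<zero>\<^bsub>M\<^esub>)"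
      using True by (intro M.finsum_cong'[OF refl]) (auto simp: z_def d_closed)
    moreover have "(\<lambda>S'. z S' p k) = (if p = 0 \<and> k = 0 then c else (\<lambda>_. \<zero>\<^bsub>M\<^esub>))"
      by (auto simp: z_def)
    then have "kdiff (\<lambda>S'. z S' p k) S = \<zero>\<^bsub>M\<^esub>"
      using cycle by (simp add: koszul_diff_zero)
    ultimately show ?thesis
      using True by (simp add: total_diff_eq)
  qed (rule total_diff_outside)
  then obtain w0 where w0: "w0 \<in> total_chains M s n (Suc N)" and z_w0: "\<And>S p k. z S p k = tdiff w0 S p k"
    using total_complex_exact[OF z] by blast
  have "\<exists>w \<in> total_chains M s n (Suc N). (\<forall>S p k. tdiff w S p k = tdiff w0 S p k) \<and>
      (\<forall>S p k. w S p k \<noteq> \<zero>\<^bsub>M\<^esub> \<longrightarrow> N \<le> card S)"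
    using exact w0 by (intro total_preimage_above_level) (auto simp: z_w0[symmetric] z_def)
  then obtain w where w: "w \<in> total_chains M s n (Suc N)" "\<forall>S p k. tdiff w S p k = tdiff w0 S p k"
    "\<forall>S p k. w S p k \<noteq> \<zero>\<^bsub>M\<^esub> \<longrightarrow> N \<le> card S"
    by blast
  show ?thesis
  proof (rule that[OF w(1)])
    show "\<And>S p k. tdiff w S p k = (if p = 0 \<and> k = 0 then c S else \<zero>\<^bsub>M\<^esub>)"
      using w(2) z_w0 by (simp add: z_def)
    show "\<And>S p k. w S p k \<noteq> \<zero>\<^bsub>M\<^esub> \<Longrightarrow> N \<le> card S"
      using w(3) by blast
  qed
qed

text \<open>Induction on the degree: a Koszul cycle \<open>c\<close> of degree \<open>N\<close> is lifted to a preimage \<open>w\<close> of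
  \<open>c \<otimes> f\<^bsub>0,0\<^esub>\<close> in the acyclic total complex and, using exactness in lower degrees, \<open>w\<close> is pushed
  to degrees \<open>card S \<ge> N\<close>.  Its components at \<open>p = 1\<close> are Koszul cycles \<open>c\<^sub>k\<close>, and comparing
  components at \<open>(S, 0, 0)\<close> gives \<open>c = \<Sum>\<^sub>k x\<^sub>k c\<^sub>k + \<partial>w\<^bsub>\<cdot>,0,0\<^esub>\<close>; since \<open>x\<^sub>k c\<^sub>k = \<partial>(e\<^sub>k \<and> c\<^sub>k)\<close>, \<open>c\<close> is a boundary.\<close>

lemma koszul_exact: "koszul_exact_at N"
proof (induction N rule: less_induct)
  case (less N)
  show ?case
    unfolding koszul_exact_at_def
  proof (intro ballI impI)
    fix c assume c: "c \<in> koszul_chains M s N" and cycle: "\<forall>T. kdiff c T = \<zero>\<^bsub>M\<^esub>"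
    obtain w where w: "w \<in> total_chains M s n (Suc N)"
      and Dw: "\<And>S p k. tdiff w S p k = (if p = 0 \<and> k = 0 then c S else \<zero>\<^bsub>M\<^esub>)"
      and level: "\<And>S p k. w S p k \<noteq> \<zero>\<^bsub>M\<^esub> \<Longrightarrow> N \<le> card S"
      using koszul_cycle_total_preimage[OF less.IH c] cycle by blast
    have wc: "\<And>S p k. w S p k \<in> carrier M"
      using w by (rule total_chains_closed)
    have ws: "\<And>S p k. w S p k \<noteq> \<zero>\<^bsub>M\<^esub> \<Longrightarrow> S \<subseteq> {..<s} \<and> card S + p = Suc N \<and> k < n p"
      using w by (rule total_chains_support)
    define ck where "ck k = (\<lambda>S. w S 1 k)" for k
    have cycle1: "\<And>S p k. p \<noteq> 0 \<Longrightarrow> tdiff w S p k = \<zero>\<^bsub>M\<^esub>"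
      using Dw by simp
    have ck: "ck k \<in> koszul_chains M s N" for k
      using total_level_slice_chains[OF w cycle1 level order_refl] by (simp add: ck_def)
    have ck_cycle: "kdiff (ck k) T = \<zero>\<^bsub>M\<^esub>" for k T
      using total_level_slice_cycle[OF w cycle1 level order_refl] by (simp add: ck_def)
    define b where "b S = (\<Oplus>\<^bsub>M\<^esub> k\<in>{..<s}. koszul_wedge M k (ck k) S) \<oplus>\<^bsub>M\<^esub> w S 0 0" for S
    have wedge: "\<And>k. k < s \<Longrightarrow> koszul_wedge M k (ck k) \<in> koszul_chains M s (Suc N)"
      using koszul_wedge_chains[OF ck] by blast
    note wedge_closed = koszul_chains_closed[OF wedge]
    have "S \<subseteq> {..<s} \<and> card S = Suc N" if "b S \<noteq> \<zero>\<^bsub>M\<^esub>" for S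
    proof (rule ccontr)
      assume bad: "\<not> (S \<subseteq> {..<s} \<and> card S = Suc N)"
      have "(\<Oplus>\<^bsub>M\<^esub> k\<in>{..<s}. koszul_wedge M k (ck k) S) = (\<Oplus>\<^bsub>M\<^esub> k\<in>{..<s}. \<zero>\<^bsub>M\<^esub>)"
        using koszul_chains_support[OF wedge] bad by (intro M.finsum_cong'[OF refl]) auto
      moreover have "w S 0 0 = \<zero>\<^bsub>M\<^esub>"
        using ws[of S 0 0] bad by auto
      ultimately show False
        using that by (simp add: b_def)
    qed
    moreover have "b S \<in> carrier M" for S
      unfolding b_def using wc wedge_closed by (simp add: M.finsum_closed Pi_def)
    ultimately have "b \<in> koszul_chains M s (Suc N)"
      unfolding koszul_chains_def by blast
    moreover have "c T = kdiff b T" for T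
    proof (cases "T \<subseteq> {..<s}")
      case True
      have "(\<Oplus>\<^bsub>M\<^esub> k\<in>{..<n 1}. d 1 0 k \<odot>\<^bsub>M\<^esub> w T 1 k) = (\<Oplus>\<^bsub>M\<^esub> k\<in>{..<s}. kdiff (koszul_wedge M k (ck k)) T)"
        using koszul_diff_wedge[OF ck ck_cycle] wedge_closed
        by (intro M.finsum_cong') (auto simp: s_eq x_eq ck_def koszul_diff_closed n0 d_closed wc)
      also have "\<dots> = kdiff (\<lambda>S. \<Oplus>\<^bsub>M\<^esub> k\<in>{..<s}. koszul_wedge M k (ck k) S) T"
        using wedge_closed by (intro koszul_diff_finsum[symmetric]) auto
      finally have "c T = kdiff (\<lambda>S. \<Oplus>\<^bsub>M\<^esub> k\<in>{..<s}. koszul_wedge M k (ck k) S) T \<oplus>\<^bsub>M\<^esub> kdiff (\<lambda>S. w S 0 0) T"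
        using Dw[of T 0 0] True n0 by (simp add: total_diff_eq)
      then show ?thesis
        unfolding b_def using wc wedge_closed by (simp add: koszul_diff_add M.finsum_closed Pi_def)
    next
      case False
      then show ?thesis
        using koszul_chains_support[OF c] by (auto simp: koszul_diff_def)
    qed
    ultimately show "\<exists>b \<in> koszul_chains M s (Suc N). \<forall>T. c T = kdiff b T"
      by blast
  qed
qed

end


section \<open>Free resolutions of \<open>R/I\<close> and the theorem\<close>

lemma (in ring) unit_vec_in_vecs: "k < N \<Longrightarrow> (\<lambda>t. if t = k then \<one> else \<zero>) \<in> vecs R N"
  unfolding vecs_def by auto

lemma (in ring) mat_act_unit_vec:
  assumes "k < N" "j < p" "\<And>t. t < N \<Longrightarrow> A j t \<in> carrier R"
  shows "mat_act R (\<otimes>) A p N (\<lambda>t. if t = k then \<one> else \<zero>) j = A j k"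
proof -
  have "(\<Oplus>t\<in>{..<N}. A j t \<otimes> (if t = k then \<one> else \<zero>)) = (\<Oplus>t\<in>{..<N}. if k = t then A j t else \<zero>)"
    by (intro add.finprod_cong') (use assms in auto)
  also have "\<dots> = A j k"
    by (rule add.finprod_singleton) (use assms in auto)
  finally show ?thesis
    using assms by (simp add: mat_act_def)
qed

lemma finite_free_resolution_d_closed:
  assumes "finite_free_resolution R I n d" "j < n p" "k < n (Suc p)"
  shows "d (Suc p) j k \<in> carrier R"
proof -
  have "\<forall>i\<ge>1. \<forall>j<n (i - 1). \<forall>k<n i. d i j k \<in> carrier R"
    using assms(1) unfolding finite_free_resolution_def by blast
  from this[rule_format, of "Suc p"] show ?thesis
    using assms(2,3) by simp
qed

text \<open>Applying the exactness of \<open>F\<close> to the unit vectors gives \<open>d\<^bsub>p+1\<^esub> d\<^bsub>p+2\<^esub> = 0\<close> entrywise.\<close>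

lemma (in ring) finite_free_resolution_d_comp_d:
  assumes res: "finite_free_resolution R I n d" and j: "j < n p" and k: "k < n (Suc (Suc p))"
  shows "(\<Oplus>k'\<in>{..<n (Suc p)}. d (Suc p) j k' \<otimes> d (Suc (Suc p)) k' k) = \<zero>"
proof -
  note d_closed = finite_free_resolution_d_closed[OF res]
  define e where "e = (\<lambda>t. if t = k then \<one> else \<zero>)"
  define v where "v = mat_act R (\<otimes>) (d (Suc (Suc p))) (n (Suc p)) (n (Suc (Suc p))) e"
  have "\<forall>i\<ge>1. {x \<in> vecs R (n i). mat_act R (\<otimes>) (d i) (n (i - 1)) (n i) x = (\<lambda>_. \<zero>)}
      = mat_act R (\<otimes>) (d (Suc i)) (n i) (n (Suc i)) ` vecs R (n (Suc i))"
    using res unfolding finite_free_resolution_def by blast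
  from this[rule_format, of "Suc p"] have exact: "{x \<in> vecs R (n (Suc p)). mat_act R (\<otimes>) (d (Suc p)) (n p) (n (Suc p)) x = (\<lambda>_. \<zero>)}
      = mat_act R (\<otimes>) (d (Suc (Suc p))) (n (Suc p)) (n (Suc (Suc p))) ` vecs R (n (Suc (Suc p)))"
    by simp
  have "e \<in> vecs R (n (Suc (Suc p)))"
    unfolding e_def using k by (rule unit_vec_in_vecs)
  then have "mat_act R (\<otimes>) (d (Suc p)) (n p) (n (Suc p)) v = (\<lambda>_. \<zero>)"
    using exact unfolding v_def by blast
  then have "mat_act R (\<otimes>) (d (Suc p)) (n p) (n (Suc p)) v j = \<zero>"
    by simp
  then have "(\<Oplus>k'\<in>{..<n (Suc p)}. d (Suc p) j k' \<otimes> v k') = \<zero>"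
    using j by (simp add: mat_act_def)
  moreover have "(\<Oplus>k'\<in>{..<n (Suc p)}. d (Suc p) j k' \<otimes> v k')
      = (\<Oplus>k'\<in>{..<n (Suc p)}. d (Suc p) j k' \<otimes> d (Suc (Suc p)) k' k)"
  proof (rule finsum_cong'[OF refl])
    fix k' assume k': "k' \<in> {..<n (Suc p)}"
    have "v k' = d (Suc (Suc p)) k' k"
      unfolding v_def e_def by (rule mat_act_unit_vec) (use k k' d_closed in auto)
    then show "d (Suc p) j k' \<otimes> v k' = d (Suc p) j k' \<otimes> d (Suc (Suc p)) k' k"
      by simp
  qed (use j k d_closed in auto)
  ultimately show ?thesis
    by simp
qed

lemma (in ring) finite_free_resolution_first_row:
  assumes res: "finite_free_resolution R I n d" and j: "j < n 1"
  shows "d 1 0 j \<in> I"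
proof -
  have n0: "n 0 = 1"
    using res by (simp add: finite_free_resolution_def)
  define e where "e = (\<lambda>t. if t = j then \<one> else \<zero>)"
  have "e \<in> vecs R (n 1)"
    unfolding e_def using j by (rule unit_vec_in_vecs)
  then have "mat_act R (\<otimes>) (d 1) 1 (n 1) e \<in> mat_act R (\<otimes>) (d 1) 1 (n 1) ` vecs R (n 1)"
    by (rule imageI)
  also have "\<dots> = {v \<in> vecs R 1. v 0 \<in> I}"
    using res unfolding finite_free_resolution_def by (elim conjE)
  finally have "mat_act R (\<otimes>) (d 1) 1 (n 1) e \<in> {v \<in> vecs R 1. v 0 \<in> I}" .
  moreover have "mat_act R (\<otimes>) (d 1) 1 (n 1) e 0 = d 1 0 j"
    unfolding e_def
    by (rule mat_act_unit_vec) (use j n0 finite_free_resolution_d_closed[OF res, of _ 0] in auto)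
  ultimately show ?thesis
    by simp
qed

lemma Tor_zero_wrt_exact:
  assumes tor: "\<forall>i. Tor_zero_wrt R M n d i" and n0: "n 0 = 1" and v: "v \<in> vecs M (n p)"
    and cycle: "1 \<le> p \<longrightarrow> mat_act M (smult M) (d p) (n (p - 1)) (n p) v = (\<lambda>_. \<zero>\<^bsub>M\<^esub>)"
  shows "\<exists>u\<in>vecs M (n (Suc p)). mat_act M (smult M) (d (Suc p)) (n p) (n (Suc p)) u = v"
proof (cases "p = 0")
  case True
  then have "v \<in> mat_act M (smult M) (d 1) 1 (n 1) ` vecs M (n 1)"
    using spec[OF tor, of 0] v n0 unfolding Tor_zero_wrt_def by simp
  then show ?thesis
    using True n0 by auto
next
  case False
  then have "v \<in> mat_act M (smult M) (d (Suc p)) (n p) (n (Suc p)) ` vecs M (n (Suc p))"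
    using spec[OF tor, of p] v cycle unfolding Tor_zero_wrt_def by auto
  then show ?thesis
    by auto
qed

lemma Tor_all_vanish_koszul_tensor_resolution:
  assumes "ideal I R" "module R M" "Tor_all_vanish R I M"
  obtains n d where "koszul_tensor_resolution R M (n 1) (d 1 0) n d" "\<And>j. j < n 1 \<Longrightarrow> d 1 0 j \<in> I"
proof -
  interpret module R M by (fact assms(2))
  obtain n d where res: "finite_free_resolution R I n d" and tor: "\<forall>i. Tor_zero_wrt R M n d i"
    using assms(3) unfolding Tor_all_vanish_def by blast
  have n0: "n 0 = 1"
    using res by (simp add: finite_free_resolution_def)
  have "koszul R M (n 1) (d 1 0)"
    using finite_free_resolution_d_closed[OF res, of _ 0] n0
    by (intro koszul.intro koszul_axioms.intro assms(2)) simp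
  moreover have "koszul_tensor_resolution_axioms R M (n 1) (d 1 0) n d"
  proof
    show "\<And>p j k. j < n p \<Longrightarrow> k < n (Suc p) \<Longrightarrow> d (Suc p) j k \<in> carrier R"
      by (rule finite_free_resolution_d_closed[OF res])
    show "\<And>p j k. j < n p \<Longrightarrow> k < n (Suc (Suc p)) \<Longrightarrow>
        (\<Oplus>\<^bsub>R\<^esub> k'\<in>{..<n (Suc p)}. d (Suc p) j k' \<otimes>\<^bsub>R\<^esub> d (Suc (Suc p)) k' k) = \<zero>\<^bsub>R\<^esub>"
      by (rule finite_free_resolution_d_comp_d[OF res])
    show "\<And>p v. v \<in> vecs M (n p) \<Longrightarrow>
        (1 \<le> p \<longrightarrow> mat_act M (smult M) (d p) (n (p - 1)) (n p) v = (\<lambda>_. \<zero>\<^bsub>M\<^esub>)) \<Longrightarrow>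
        \<exists>u\<in>vecs M (n (Suc p)). mat_act M (smult M) (d (Suc p)) (n p) (n (Suc p)) u = v"
      by (rule Tor_zero_wrt_exact[OF tor n0])
  qed (simp_all add: n0)
  ultimately have "koszul_tensor_resolution R M (n 1) (d 1 0) n d"
    by (rule koszul_tensor_resolution.intro)
  moreover have "\<And>j. j < n 1 \<Longrightarrow> d 1 0 j \<in> I"
    using finite_free_resolution_first_row[OF res] .
  ultimately show ?thesis
    by (rule that)
qed

lemma (in koszul_tensor_resolution) annihilator_eq_zero:
  assumes m: "m \<in> carrier M" and ann: "\<And>j. j < s \<Longrightarrow> x j \<odot>\<^bsub>M\<^esub> m = \<zero>\<^bsub>M\<^esub>"
  shows "m = \<zero>\<^bsub>M\<^esub>"
proof -
  define z where "z S = (if S = {..<s} then m else \<zero>\<^bsub>M\<^esub>)" for S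
  have z: "z \<in> koszul_chains M s s"
    unfolding koszul_chains_def z_def using m by auto
  have "kdiff z T = \<zero>\<^bsub>M\<^esub>" for T
  proof (cases "T \<subseteq> {..<s}")
    case True
    have "(\<Oplus>\<^bsub>M\<^esub> j\<in>{..<s} - T. signed M (koszul_sign j T) (x j \<odot>\<^bsub>M\<^esub> z (insert j T)))
        = (\<Oplus>\<^bsub>M\<^esub> j\<in>{..<s} - T. \<zero>\<^bsub>M\<^esub>)"
      by (intro M.finsum_cong'[OF refl]) (auto simp: z_def ann x_closed)
    then show ?thesis
      using True by (simp add: koszul_diff_def)
  qed (simp add: koszul_diff_def)
  then obtain b where b: "b \<in> koszul_chains M s (Suc s)" and zb: "\<And>T. z T = kdiff b T"
    using koszul_exact[of s] z unfolding koszul_exact_at_def by blast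
  have "b S = \<zero>\<^bsub>M\<^esub>" for S
  proof (rule ccontr)
    assume "b S \<noteq> \<zero>\<^bsub>M\<^esub>"
    then have "S \<subseteq> {..<s}" "card S = Suc s"
      using koszul_chains_support[OF b] by blast+
    moreover have "card S \<le> card {..<s}"
      using \<open>S \<subseteq> {..<s}\<close> by (intro card_mono) simp_all
    ultimately show False
      by simp
  qed
  then have "kdiff b {..<s} = kdiff (\<lambda>S. \<zero>\<^bsub>M\<^esub>) {..<s}"
    by (intro koszul_diff_cong) simp_all
  then show ?thesis
    using zb[of "{..<s}"] by (simp add: z_def koszul_diff_zero)
qed

lemma Hom_quot_eq_smult:
  assumes "ideal I R" "module R M" "f \<in> Hom_quot R I M"
  obtains m where "m \<in> carrier M" "\<And>a. a \<in> I \<Longrightarrow> a \<odot>\<^bsub>M\<^esub> m = \<zero>\<^bsub>M\<^esub>"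
    "\<And>r. r \<in> carrier R \<Longrightarrow> f (I +>\<^bsub>R\<^esub> r) = r \<odot>\<^bsub>M\<^esub> m"
proof -
  interpret module R M by (fact assms(2))
  interpret I: ideal I R by (fact assms(1))
  have f_closed: "f \<in> carrier (R Quot I) \<rightarrow> carrier M"
    and f_smult: "\<And>r C. r \<in> carrier R \<Longrightarrow> C \<in> carrier (R Quot I) \<Longrightarrow>
        f ((I +>\<^bsub>R\<^esub> r) \<otimes>\<^bsub>(R Quot I)\<^esub> C) = r \<odot>\<^bsub>M\<^esub> f C"
    using assms(3) unfolding Hom_quot_def by blast+
  have coset: "\<And>a. a \<in> carrier R \<Longrightarrow> I +>\<^bsub>R\<^esub> a \<in> carrier (R Quot I)"
    unfolding FactRing_def A_RCOSETS_def' by auto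
  define m where "m = f (I +>\<^bsub>R\<^esub> \<one>\<^bsub>R\<^esub>)"
  have m: "m \<in> carrier M"
    unfolding m_def using f_closed coset[of "\<one>\<^bsub>R\<^esub>"] by auto
  have f_coset: "f (I +>\<^bsub>R\<^esub> r) = r \<odot>\<^bsub>M\<^esub> m" if r: "r \<in> carrier R" for r
  proof -
    have "(I +>\<^bsub>R\<^esub> r) \<otimes>\<^bsub>(R Quot I)\<^esub> (I +>\<^bsub>R\<^esub> \<one>\<^bsub>R\<^esub>) = I +>\<^bsub>R\<^esub> r"
      unfolding FactRing_def using I.rcoset_mult_add[of r "\<one>\<^bsub>R\<^esub>"] r by simp
    then show ?thesis
      unfolding m_def using f_smult[OF r coset[of "\<one>\<^bsub>R\<^esub>"]] by simp
  qed
  have "a \<odot>\<^bsub>M\<^esub> m = \<zero>\<^bsub>M\<^esub>" if a: "a \<in> I" for a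
  proof -
    have "I +>\<^bsub>R\<^esub> a = I +>\<^bsub>R\<^esub> \<zero>\<^bsub>R\<^esub>"
      using a R.a_rcos_zero[OF assms(1)] by simp
    then show ?thesis
      using f_coset[of a] f_coset[of "\<zero>\<^bsub>R\<^esub>"] a I.Icarr m by simp
  qed
  then show ?thesis
    using m f_coset that by blast
qed

theorem lemma3p1:
  fixes R :: "('a, 'c) ring_scheme" and I :: "'a set" and M :: "('a, 'b, 'd) module_scheme"
  assumes "cring R" and "noetherian_ring R"
    and "ideal I R"
    and "module R M"
    and "Tor_all_vanish R I M"
  shows "\<forall>f\<in>Hom_quot R I M. \<forall>x\<in>carrier (R Quot I). f x = \<zero>\<^bsub>M\<^esub>"
proof (intro ballI)
  fix f C assume f: "f \<in> Hom_quot R I M" and C: "C \<in> carrier (R Quot I)"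
  interpret module R M by (fact assms(4))
  obtain n d where kr: "koszul_tensor_resolution R M (n 1) (d 1 0) n d"
    and gens: "\<And>j. j < n 1 \<Longrightarrow> d 1 0 j \<in> I"
    using Tor_all_vanish_koszul_tensor_resolution[OF assms(3-5)] by blast
  interpret koszul_tensor_resolution R M "n 1" "d 1 0" n d
    by (fact kr)
  obtain m where m: "m \<in> carrier M" "\<And>a. a \<in> I \<Longrightarrow> a \<odot>\<^bsub>M\<^esub> m = \<zero>\<^bsub>M\<^esub>"
    and f_coset: "\<And>r. r \<in> carrier R \<Longrightarrow> f (I +>\<^bsub>R\<^esub> r) = r \<odot>\<^bsub>M\<^esub> m"
    using Hom_quot_eq_smult[OF assms(3,4) f] by blast
  have "m = \<zero>\<^bsub>M\<^esub>"
    using annihilator_eq_zero[OF m(1)] m(2) gens by blast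
  moreover obtain r where "r \<in> carrier R" "C = I +>\<^bsub>R\<^esub> r"
    using C unfolding FactRing_def A_RCOSETS_def' by auto
  ultimately show "f C = \<zero>\<^bsub>M\<^esub>"
    using f_coset by simp
qed

end
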